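(* Let $(\Lambda,d)$ be a $k$-graph and let $(\overline{\Lambda},\overline d)$ be the extension described in the context. Then $\overline{\Lambda}$ with $\overline d$ satisfies the factorization property: for every morphism $f$ of $\overline{\Lambda}$ and $a,b\in\mathbb{N}^k$ with $\overline d(f)=a+b$ there exist unique morphisms $g,h$ of $\overline{\Lambda}$ with $f=gh$, $\overline d(g)=a$ and $\overline d(h)=b$.
   Context: A $k$-graph $(\Lambda,d)$ is a countable category with a degree functor $d:\Lambda\to\mathbb{N}^k$ satisfying unique factorization; $\Lambda^0$ vertices, $r,s$ range/source, $v\Lambda^n=\{\lambda:r(\lambda)=v,d(\lambda)=n\}$; $e_i$ standard basis, $\le$ coordinatewise, $\vee,\wedge$ coordinatewise max/min. For $m\in(\mathbb{N}\cup\{\infty\})^k$, $\Omega_{k,m}$ has objects $\{p\in\mathbb{N}^k:p\le m\}$, morphisms $(p,q)$, $p\le q\le m$, $r(p,q)=p$, $s(p,q)=q$, $d(p,q)=q-p$. A graph morphism $x:\Omega_{k,m}\to\Lambda$ is a degree-preserving functor; $d(x)=m$, $x(a,b)=x((a,b))$, $x(a)=x(a,a)$. It is a boundary path if there is $n_x\in\mathbb{N}^k$, $n_x\le d(x)$, with $x(p)\Lambda^{e_i}=\emptyset$ whenever $p\in\mathbb{N}^k$, $n_x\le p\le d(x)$, $p_i=d(x)_i$; $\Lambda^{\le\infty}$ is the set of boundary paths. $\sigma^px(a,b)=x(a+p,b+p)$ ($p\le d(x)$); $\lambda x$ denotes concatenation of $\lambda$ (with $s(\lambda)=x(0)$) in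 front of $x$, a graph morphism on $\Omega_{k,d(\lambda)+d(x)}$. $V_\Lambda=\{(x;m):x\in\Lambda^{\le\infty},m\in\mathbb{N}^k,m\not\le d(x)\}$, $(x;m)\approx(y;p)$ iff $x(m\wedge d(x))=y(p\wedge d(y))$ and $m-m\wedge d(x)=p-p\wedge d(y)$; classes $[x;m]$ form $\widetilde{V_\Lambda}$. $P_\Lambda=\{(x;(m,n)):x\in\Lambda^{\le\infty},m\le n\in\mathbb{N}^k,n\not\le d(x)\}$, $(x;(m,n))\sim(y;(p,q))$ iff $x(m\wedge d(x),n\wedge d(x))=y(p\wedge d(y),q\wedge d(y))$, $m-m\wedge d(x)=p-p\wedge d(y)$, $n-m=q-p$; classes $[x;(m,n)]$ form $\widetilde{P_\Lambda}$. The extension $\overline{\Lambda}$ is the category with objects $\Lambda^0\sqcup\widetilde{V_\Lambda}$ and morphisms $\Lambda\sqcup\widetilde{P_\Lambda}$: on $\Lambda$ everything is as in $\Lambda$; $\overline r([x;(m,n)])=x(m)$ if $m\le d(x)$, else $[x;m]$; $\overline s([x;(m,n)])=[x;n]$; identity at $[x;m]$ is $[x;(m,m)]$; $\lambda[x;(m,n)]=[\lambda\sigma^mx;(0,d(\lambda)+n-m)]$ when $s(\lambda)=\overline r([x;(m,n)])$; $[x;(m,n)][y;(p,q)]=[z;(m,n+q-p)]$ with $z=x(0,n\wedge d(x))\sigma^{p\wedge d(y)}y$ when $\overline s([x;(m,n)])=\overline r([y;(p,q)])$. The degree is $\overline d|_\Lambda=d$ and $\overline d([x;(m,n)])=n-m$.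 *)

theory Defs
  imports Main "HOL-Library.Extended_Nat" "HOL-Library.Function_Algebras"
    "HOL-Library.Countable_Set"
begin

text \<open>Elements of N^k are functions nat => nat vanishing at indices >= k;
  elements of (N u {infinity})^k are functions nat => enat vanishing at indices >= k.\<close>

type_synonym vec = "nat \<Rightarrow> nat"
type_synonym evec = "nat \<Rightarrow> enat"

definition NK :: "nat \<Rightarrow> vec set" where
  "NK k = {n. \<forall>i. k \<le> i \<longrightarrow> n i = 0}"

definition ENK :: "nat \<Rightarrow> evec set" where
  "ENK k = {n. \<forall>i. k \<le> i \<longrightarrow> n i = 0}"

definition basis :: "nat \<Rightarrow> vec" where
  "basis i = (\<lambda>j. if j = i then 1 else 0)"

definition vle :: "vec \<Rightarrow> evec \<Rightarrow> bool" where
  "vle m D \<longleftrightarrow> (\<forall>i. enat (m i) \<le> D i)"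

definition meet :: "vec \<Rightarrow> evec \<Rightarrow> vec" where
  "meet m D = (\<lambda>i. if enat (m i) \<le> D i then m i else the_enat (D i))"

definition eadd :: "vec \<Rightarrow> evec \<Rightarrow> evec" where
  "eadd m D = (\<lambda>i. enat (m i) + D i)"

definition esub :: "evec \<Rightarrow> vec \<Rightarrow> evec" where
  "esub D m = (\<lambda>i. D i - enat (m i))"

record ('v, 'a) kgraph =
  kg_obj :: "'v set"
  kg_mor :: "'a set"
  kg_rng :: "'a \<Rightarrow> 'v"
  kg_src :: "'a \<Rightarrow> 'v"
  kg_cmp :: "'a \<Rightarrow> 'a \<Rightarrow> 'a"
  kg_id  :: "'v \<Rightarrow> 'a"
  kg_deg :: "'a \<Rightarrow> vec"

definition is_kgraph :: "nat \<Rightarrow> ('v, 'a) kgraph \<Rightarrow> bool" where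
  "is_kgraph k G \<longleftrightarrow>
     countable (kg_obj G) \<and> countable (kg_mor G) \<and>
     (\<forall>v \<in> kg_obj G. kg_id G v \<in> kg_mor G \<and> kg_rng G (kg_id G v) = v \<and> kg_src G (kg_id G v) = v) \<and>
     (\<forall>l \<in> kg_mor G. kg_rng G l \<in> kg_obj G \<and> kg_src G l \<in> kg_obj G) \<and>
     (\<forall>l \<in> kg_mor G. \<forall>m \<in> kg_mor G. kg_src G l = kg_rng G m \<longrightarrow>
        kg_cmp G l m \<in> kg_mor G \<and> kg_rng G (kg_cmp G l m) = kg_rng G l \<and>
        kg_src G (kg_cmp G l m) = kg_src G m) \<and>
     (\<forall>l \<in> kg_mor G. kg_cmp G (kg_id G (kg_rng G l)) l = l \<and> kg_cmp G l (kg_id G (kg_src G l)) = l) \<and>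
     (\<forall>l \<in> kg_mor G. \<forall>m \<in> kg_mor G. \<forall>n \<in> kg_mor G.
        kg_src G l = kg_rng G m \<and> kg_src G m = kg_rng G n \<longrightarrow>
        kg_cmp G (kg_cmp G l m) n = kg_cmp G l (kg_cmp G m n)) \<and>
     (\<forall>l \<in> kg_mor G. kg_deg G l \<in> NK k) \<and>
     (\<forall>l \<in> kg_mor G. \<forall>m \<in> kg_mor G. kg_src G l = kg_rng G m \<longrightarrow>
        kg_deg G (kg_cmp G l m) = kg_deg G l + kg_deg G m) \<and>
     (\<forall>l \<in> kg_mor G. \<forall>m \<in> NK k. \<forall>n \<in> NK k. kg_deg G l = m + n \<longrightarrow>
        (\<exists>!p. fst p \<in> kg_mor G \<and> snd p \<in> kg_mor G \<and> kg_src G (fst p) = kg_rng G (snd p) \<and>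
              l = kg_cmp G (fst p) (snd p) \<and> kg_deg G (fst p) = m \<and> kg_deg G (snd p) = n))"

text \<open>A path is a pair (d(x), x) where x(p,q) is the image of the morphism (p,q) of
  Omega_{k,d(x)}; values outside the domain are fixed to undefined.\<close>

type_synonym 'a kpath = "evec \<times> (vec \<Rightarrow> vec \<Rightarrow> 'a)"

definition in_Omega :: "nat \<Rightarrow> evec \<Rightarrow> vec \<Rightarrow> vec \<Rightarrow> bool" where
  "in_Omega k D p q \<longleftrightarrow> p \<in> NK k \<and> q \<in> NK k \<and> p \<le> q \<and> vle q D"

definition graph_morphism :: "nat \<Rightarrow> ('v, 'a) kgraph \<Rightarrow> 'a kpath \<Rightarrow> bool" where
  "graph_morphism k G x \<longleftrightarrow>
     fst x \<in> ENK k \<and>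
     (\<forall>p q. in_Omega k (fst x) p q \<longrightarrow> snd x p q \<in> kg_mor G \<and> kg_deg G (snd x p q) = q - p) \<and>
     (\<forall>p q t. in_Omega k (fst x) p q \<and> in_Omega k (fst x) q t \<longrightarrow>
        kg_src G (snd x p q) = kg_rng G (snd x q t) \<and> kg_cmp G (snd x p q) (snd x q t) = snd x p t) \<and>
     (\<forall>p. in_Omega k (fst x) p p \<longrightarrow> snd x p p = kg_id G (kg_rng G (snd x p p))) \<and>
     (\<forall>p q. \<not> in_Omega k (fst x) p q \<longrightarrow> snd x p q = undefined)"

definition vtx :: "('v, 'a) kgraph \<Rightarrow> 'a kpath \<Rightarrow> vec \<Rightarrow> 'v" where
  "vtx G x p = kg_rng G (snd x p p)"

definition boundary_paths :: "nat \<Rightarrow> ('v, 'a) kgraph \<Rightarrow> 'a kpath set" where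
  "boundary_paths k G = {x. graph_morphism k G x \<and>
     (\<exists>nx \<in> NK k. vle nx (fst x) \<and>
        (\<forall>p \<in> NK k. \<forall>i < k. nx \<le> p \<and> vle p (fst x) \<and> enat (p i) = fst x i \<longrightarrow>
           {l \<in> kg_mor G. kg_rng G l = vtx G x p \<and> kg_deg G l = basis i} = {}))}"

definition restrictP :: "nat \<Rightarrow> evec \<Rightarrow> (vec \<Rightarrow> vec \<Rightarrow> 'a) \<Rightarrow> (vec \<Rightarrow> vec \<Rightarrow> 'a)" where
  "restrictP k D f = (\<lambda>a b. if in_Omega k D a b then f a b else undefined)"

definition shift :: "nat \<Rightarrow> vec \<Rightarrow> 'a kpath \<Rightarrow> 'a kpath" where
  "shift k p x = (esub (fst x) p, restrictP k (esub (fst x) p) (\<lambda>a b. snd x (a + p) (b + p)))"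

definition mid :: "('v, 'a) kgraph \<Rightarrow> 'a \<Rightarrow> vec \<Rightarrow> vec \<Rightarrow> 'a" where
  "mid G mu a b = (THE nu. \<exists>al be. al \<in> kg_mor G \<and> nu \<in> kg_mor G \<and> be \<in> kg_mor G \<and>
      kg_src G al = kg_rng G nu \<and> kg_src G nu = kg_rng G be \<and>
      mu = kg_cmp G al (kg_cmp G nu be) \<and> kg_deg G al = a \<and> kg_deg G nu = b - a)"

text \<open>concatenation lambda x (s(lambda) = x(0)), a graph morphism on Omega_{k,d(lambda)+d(x)}:
  (lambda x)(a,b) is the segment (a,b) of lambda x(0, (b v d(lambda)) - d(lambda)).\<close>
definition concat :: "nat \<Rightarrow> ('v, 'a) kgraph \<Rightarrow> 'a \<Rightarrow> 'a kpath \<Rightarrow> 'a kpath" where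
  "concat k G l x = (let D = eadd (kg_deg G l) (fst x) in
     (D, restrictP k D (\<lambda>a b. mid G (kg_cmp G l (snd x 0 (sup b (kg_deg G l) - kg_deg G l))) a b)))"

definition VL :: "nat \<Rightarrow> ('v, 'a) kgraph \<Rightarrow> ('a kpath \<times> vec) set" where
  "VL k G = {(x, m). x \<in> boundary_paths k G \<and> m \<in> NK k \<and> \<not> vle m (fst x)}"

definition Vrel :: "nat \<Rightarrow> ('v, 'a) kgraph \<Rightarrow> (('a kpath \<times> vec) \<times> ('a kpath \<times> vec)) set" where
  "Vrel k G = {((x, m), (y, p)). (x, m) \<in> VL k G \<and> (y, p) \<in> VL k G \<and>
      vtx G x (meet m (fst x)) = vtx G y (meet p (fst y)) \<and>
      m - meet m (fst x) = p - meet p (fst y)}"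

definition PL :: "nat \<Rightarrow> ('v, 'a) kgraph \<Rightarrow> ('a kpath \<times> (vec \<times> vec)) set" where
  "PL k G = {(x, (m, n)). x \<in> boundary_paths k G \<and> m \<in> NK k \<and> n \<in> NK k \<and> m \<le> n \<and>
      \<not> vle n (fst x)}"

definition Prel :: "nat \<Rightarrow> ('v, 'a) kgraph \<Rightarrow>
    (('a kpath \<times> (vec \<times> vec)) \<times> ('a kpath \<times> (vec \<times> vec))) set" where
  "Prel k G = {((x, (m, n)), (y, (p, q))). (x, (m, n)) \<in> PL k G \<and> (y, (p, q)) \<in> PL k G \<and>
      snd x (meet m (fst x)) (meet n (fst x)) = snd y (meet p (fst y)) (meet q (fst y)) \<and>
      m - meet m (fst x) = p - meet p (fst y) \<and> n - m = q - p}"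

definition rep :: "'b set \<Rightarrow> 'b" where
  "rep c = (SOME e. e \<in> c)"

definition bar_obj :: "nat \<Rightarrow> ('v, 'a) kgraph \<Rightarrow> ('v + ('a kpath \<times> vec) set) set" where
  "bar_obj k G = Inl ` kg_obj G \<union> Inr ` (VL k G // Vrel k G)"

definition bar_mor :: "nat \<Rightarrow> ('v, 'a) kgraph \<Rightarrow> ('a + ('a kpath \<times> (vec \<times> vec)) set) set" where
  "bar_mor k G = Inl ` kg_mor G \<union> Inr ` (PL k G // Prel k G)"

definition bar_deg :: "nat \<Rightarrow> ('v, 'a) kgraph \<Rightarrow> ('a + ('a kpath \<times> (vec \<times> vec)) set) \<Rightarrow> vec" where
  "bar_deg k G f = (case f of Inl l \<Rightarrow> kg_deg G l
     | Inr c \<Rightarrow> (case rep c of (x, (m, n)) \<Rightarrow> n - m))"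

definition bar_rng :: "nat \<Rightarrow> ('v, 'a) kgraph \<Rightarrow> ('a + ('a kpath \<times> (vec \<times> vec)) set) \<Rightarrow>
    ('v + ('a kpath \<times> vec) set)" where
  "bar_rng k G f = (case f of Inl l \<Rightarrow> Inl (kg_rng G l)
     | Inr c \<Rightarrow> (case rep c of (x, (m, n)) \<Rightarrow>
          if vle m (fst x) then Inl (vtx G x m) else Inr (Vrel k G `` {(x, m)})))"

definition bar_src :: "nat \<Rightarrow> ('v, 'a) kgraph \<Rightarrow> ('a + ('a kpath \<times> (vec \<times> vec)) set) \<Rightarrow>
    ('v + ('a kpath \<times> vec) set)" where
  "bar_src k G f = (case f of Inl l \<Rightarrow> Inl (kg_src G l)
     | Inr c \<Rightarrow> (case rep c of (x, (m, n)) \<Rightarrow> Inr (Vrel k G `` {(x, n)})))"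

definition bar_cmp :: "nat \<Rightarrow> ('v, 'a) kgraph \<Rightarrow> ('a + ('a kpath \<times> (vec \<times> vec)) set) \<Rightarrow>
    ('a + ('a kpath \<times> (vec \<times> vec)) set) \<Rightarrow> ('a + ('a kpath \<times> (vec \<times> vec)) set)" where
  "bar_cmp k G f g = (case f of
       Inl l \<Rightarrow> (case g of
           Inl m \<Rightarrow> Inl (kg_cmp G l m)
         | Inr c \<Rightarrow> (case rep c of (x, (m, n)) \<Rightarrow>
              Inr (Prel k G `` {(concat k G l (shift k m x), (0, kg_deg G l + n - m))})))
     | Inr c1 \<Rightarrow> (case g of
           Inl m \<Rightarrow> undefined
         | Inr c2 \<Rightarrow> (case rep c1 of (x, (m, n)) \<Rightarrow> (case rep c2 of (y, (p, q)) \<Rightarrow>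
              Inr (Prel k G `` {(concat k G (snd x 0 (meet n (fst x))) (shift k (meet p (fst y)) y),
                                (m, n + q - p))})))))"

end

theory Submission
  imports Defs
begin

(* A morphism [x;(m,n)] of the extension is determined by its key: the segment
   x(m \<and> d(x), n \<and> d(x)) of \<Lambda>, the overshoot m - m \<and> d(x) and the degree n - m. The
   operations of the extension act on keys; composition composes the segments in \<Lambda> and
   adds the degrees. So [x;(m,n)] factors as [x;(m,m+a)] [x;(m+a,n)], the first factor being
   the segment x(m,m+a) of \<Lambda> when m + a \<le> d(x). Conversely, the segments of the keys of
   any factorization factor the segment of [x;(m,n)] in \<Lambda>; comparing meets coordinatewise
   shows that they cut it at (m+a) \<and> d(x), and unique factorization in \<Lambda> forces the two
   factors to be the canonical ones. A morphism of \<Lambda> only factors inside \<Lambda>, because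
   every composite involving a path class is again a path class. *)

type_synonym 'a bar_arrow = "'a + ('a kpath \<times> (vec \<times> vec)) set"

section \<open>Multi-indices\<close>

lemma NK_le:
  assumes "b \<in> NK k" "(a::vec) \<le> b"
  shows "a \<in> NK k"
  using assms(1) le_funD[OF assms(2)] by (auto simp: NK_def) (metis le_zero_eq)

lemma NK_add: "a \<in> NK k \<Longrightarrow> b \<in> NK k \<Longrightarrow> a + b \<in> NK k"
  unfolding NK_def by simp

lemma NK_diff: "a \<in> NK k \<Longrightarrow> a - b \<in> NK k"
  unfolding NK_def by simp

lemma NK_0 [simp]: "0 \<in> NK k"
  unfolding NK_def by simp

lemma vec_diff_mono: "(b::vec) \<le> c \<Longrightarrow> b - a \<le> c - a"
  by (simp add: le_fun_def diff_le_mono)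

lemma vec_le_add_of_diff_le: "(n::vec) - p \<le> q \<Longrightarrow> n \<le> q + p"
  by (simp add: le_fun_def le_diff_conv)

lemma vec_diff_add: "(p::vec) \<le> q \<Longrightarrow> q - p + p = q"
  by (simp add: le_fun_def fun_eq_iff)

lemma vec_le_add_diff_self: "(b::vec) \<le> l + (b - l)"
proof -
  have "b i \<le> l i + (b i - l i)" for i
    by arith
  then show ?thesis by (simp add: le_fun_def)
qed

lemma vec_add_le_imp:
  assumes "(l::vec) + n \<le> q"
  shows "l + (q - l) = q" "n \<le> q - l"
proof -
  have "l i + (q i - l i) = q i \<and> n i \<le> q i - l i" for i
    using le_funD[OF assms, of i] by simp
  then show "l + (q - l) = q" "n \<le> q - l"
    by (simp_all add: le_fun_def fun_eq_iff)
qed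

lemma vec_add_diff_cancel_left [simp]: "(m::vec) + a - m = a"
  by (simp add: fun_eq_iff)

lemma vec_eq_diff_of_add_eq: "(a::vec) + b = c \<Longrightarrow> b = c - a"
  using vec_add_diff_cancel_left[of a b] by simp

lemma vec_sup_diff: "sup b l - l = (b::vec) - l"
  by (auto simp: fun_eq_iff sup_nat_def max_def)

lemma vec_le_add_diff:
  assumes "(m::vec) \<le> n" "p \<le> q"
  shows "m \<le> n + q - p"
proof -
  have "m i \<le> n i + q i - p i" for i
    using le_funD[OF assms(1), of i] le_funD[OF assms(2), of i] by arith
  then show ?thesis by (simp add: le_fun_def)
qed

lemma vec_add_diff_diff:
  assumes "(m::vec) \<le> n" "p \<le> q"
  shows "n + q - p - m = (n - m) + (q - p)"
proof
  fix i
  show "(n + q - p - m) i = ((n - m) + (q - p)) i"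
    using le_funD[OF assms(1), of i] le_funD[OF assms(2), of i] by simp
qed

lemma vec_split_interval:
  assumes "(n::vec) - m = a + b" "m \<le> n"
  shows "m + a \<le> n" "n - (m + a) = b"
proof -
  have "m i + a i \<le> n i \<and> n i - (m i + a i) = b i" for i
    using fun_cong[OF assms(1), of i] le_funD[OF assms(2), of i] by (simp; arith)
  then show "m + a \<le> n" "n - (m + a) = b" by (simp_all add: le_fun_def fun_eq_iff)
qed

lemma vle_le_trans: "p \<le> q \<Longrightarrow> vle q D \<Longrightarrow> vle p D"
  unfolding vle_def le_fun_def by (meson enat_ord_simps(1) order_trans)

lemma vle_0 [simp]: "vle 0 D"
  unfolding vle_def by (simp add: zero_enat_def[symmetric])

lemma vle_add_of_vle_esub:
  assumes "vle p D" "vle b (esub D p)"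
  shows "vle (b + p) D"
  unfolding vle_def
proof
  fix i
  have "enat (p i) \<le> D i" "enat (b i) \<le> D i - enat (p i)"
    using assms by (simp_all add: vle_def esub_def)
  then show "enat ((b + p) i) \<le> D i"
    by (cases "D i") auto
qed

lemma vle_diff_esub:
  assumes "vle a D"
  shows "vle (a - p) (esub D p)"
  unfolding vle_def esub_def
proof
  fix i
  have "enat (a i) \<le> D i"
    using assms by (simp add: vle_def)
  then show "enat ((a - p) i) \<le> D i - enat (p i)"
    by (cases "D i") auto
qed

lemma vle_add_eadd:
  assumes "vle q D"
  shows "vle (l + q) (eadd l D)"
  unfolding vle_def eadd_def
proof
  fix i
  have "enat (q i) \<le> D i"
    using assms by (simp add: vle_def)
  then show "enat ((l + q) i) \<le> enat (l i) + D i"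
    by (cases "D i") auto
qed

lemma vle_eadd_of_le:
  assumes "a \<le> l"
  shows "vle a (eadd l D)"
  unfolding vle_def eadd_def
proof
  fix i
  show "enat (a i) \<le> enat (l i) + D i"
    using le_funD[OF assms, of i] by (cases "D i") auto
qed

lemma vle_diff_of_vle_eadd:
  assumes "vle b (eadd l D)"
  shows "vle (b - l) D"
  unfolding vle_def
proof
  fix i
  have "enat (b i) \<le> enat (l i) + D i"
    using assms by (simp add: vle_def eadd_def)
  then show "enat ((b - l) i) \<le> D i"
    by (cases "D i") auto
qed

lemma enat_add_eq_of_eq_diff: "enat b = D - enat p \<Longrightarrow> enat p \<le> D \<Longrightarrow> enat (b + p) = D"
  by (cases D) auto

lemma enat_diff_eq_of_eq_add: "enat b = enat l + D \<Longrightarrow> enat (b - l) = D"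
  by (cases D) auto

lemma esub_ENK: "D \<in> ENK k \<Longrightarrow> p \<in> NK k \<Longrightarrow> esub D p \<in> ENK k"
  unfolding ENK_def NK_def esub_def by (simp add: zero_enat_def)

lemma eadd_ENK: "l \<in> NK k \<Longrightarrow> D \<in> ENK k \<Longrightarrow> eadd l D \<in> ENK k"
  unfolding ENK_def NK_def eadd_def by (simp add: zero_enat_def)

lemma in_Omega_left_refl: "in_Omega k D p q \<Longrightarrow> in_Omega k D p p"
  unfolding in_Omega_def using vle_le_trans by blast

lemma in_Omega_right_refl: "in_Omega k D p q \<Longrightarrow> in_Omega k D q q"
  unfolding in_Omega_def by blast

lemma in_Omega_trans: "in_Omega k D p q \<Longrightarrow> in_Omega k D q t \<Longrightarrow> in_Omega k D p t"
  unfolding in_Omega_def by auto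

lemma in_Omega_split:
  "in_Omega k D p t \<Longrightarrow> p \<le> q \<Longrightarrow> q \<le> t \<Longrightarrow> q \<in> NK k \<Longrightarrow> in_Omega k D p q \<and> in_Omega k D q t"
  unfolding in_Omega_def using vle_le_trans by blast

lemma in_Omega_0: "q \<in> NK k \<Longrightarrow> vle q D \<Longrightarrow> in_Omega k D 0 q"
  unfolding in_Omega_def by (simp add: le_fun_def)

lemma meet_apply: "meet m D i = (if enat (m i) \<le> D i then m i else the_enat (D i))"
  unfolding meet_def by simp

lemma meet_apply_enat [simp]: "D i = enat d \<Longrightarrow> meet m D i = min (m i) d"
  by (simp add: meet_apply)

lemma meet_apply_infinity [simp]: "D i = \<infinity> \<Longrightarrow> meet m D i = m i"
  by (simp add: meet_apply)

lemma meet_0 [simp]: "meet 0 D = 0"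
  unfolding fun_eq_iff meet_apply by (simp add: zero_enat_def[symmetric])

lemma meet_le: "meet m D \<le> m"
  unfolding le_fun_def
  by (metis enat.exhaust meet_apply_enat meet_apply_infinity min.cobounded1 order_refl)

lemma meet_mono: "m \<le> n \<Longrightarrow> meet m D \<le> meet n D"
  unfolding le_fun_def
  by (metis enat.exhaust meet_apply_enat meet_apply_infinity min.mono order_refl)

lemma meet_NK: "m \<in> NK k \<Longrightarrow> meet m D \<in> NK k"
  using NK_le meet_le by blast

lemma meet_vle: "vle (meet m D) D"
  unfolding vle_def
proof
  fix i
  show "enat (meet m D i) \<le> D i"
    by (cases "D i") auto
qed

lemma meet_id: "vle m D \<Longrightarrow> meet m D = m"
  unfolding vle_def fun_eq_iff meet_apply by simp

lemma vle_iff_meet_offset: "vle m D \<longleftrightarrow> m - meet m D = 0"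
proof -
  have "enat (m i) \<le> D i \<longleftrightarrow> m i - meet m D i = 0" for i
    by (cases "D i") auto
  then show ?thesis
    unfolding vle_def fun_eq_iff by simp
qed

lemma meet_offset_add:
  assumes "m \<le> n"
  shows "(meet n D - meet m D) + (n - meet n D) = (m - meet m D) + (n - m)"
proof
  fix i
  have "m i \<le> n i"
    using assms by (simp add: le_fun_def)
  then show "((meet n D - meet m D) + (n - meet n D)) i = ((m - meet m D) + (n - m)) i"
    by (cases "D i") auto
qed

lemma meet_diff_eq_0_if_offset:
  assumes "m \<le> n" "0 < (m - meet m D) i"
  shows "(meet n D - meet m D) i = 0"
  using le_funD[OF assms(1), of i] assms(2) by (cases "D i") auto

(* The degree of the concatenation \<lambda> \<sigma>^p y is d(\<lambda>) + (d(y) - p); the next lemmas compute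
   meets with it, for \<lambda> in \<Lambda> and for \<lambda> = x(0, n \<and> d(x)). *)

lemma meet_eadd_esub:
  assumes "p \<le> q" "vle p D"
  shows "meet (l + q - p) (eadd l (esub D p)) = l + (meet q D - p)"
proof
  fix i
  have "p i \<le> q i" "enat (p i) \<le> D i"
    using assms by (auto simp: le_fun_def vle_def)
  then show "meet (l + q - p) (eadd l (esub D p)) i = (l + (meet q D - p)) i"
    by (cases "D i") (auto simp: eadd_def esub_def)
qed

lemma not_vle_eadd_esub:
  assumes "p \<le> q" "vle p D" "\<not> vle q D"
  shows "\<not> vle (l + q - p) (eadd l (esub D p))"
proof
  obtain i where i: "\<not> enat (q i) \<le> D i"
    using assms(3) by (auto simp: vle_def)
  have "p i \<le> q i" "enat (p i) \<le> D i"
    using assms by (auto simp: le_fun_def vle_def)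
  moreover assume "vle (l + q - p) (eadd l (esub D p))"
  then have "enat (l i + q i - p i) \<le> enat (l i) + (D i - enat (p i))"
    by (auto simp: vle_def eadd_def esub_def)
  ultimately show False
    using i by (cases "D i") auto
qed

lemma meet_eadd_meet_left:
  assumes "m \<le> n" "n - meet n Dx = p - meet p Dy"
  shows "meet m (eadd (meet n Dx) (esub Dy (meet p Dy))) = meet m Dx"
proof
  fix i
  have "m i \<le> n i" "n i - meet n Dx i = p i - meet p Dy i"
    using assms by (auto simp: le_fun_def fun_eq_iff)
  then show "meet m (eadd (meet n Dx) (esub Dy (meet p Dy))) i = meet m Dx i"
    by (cases "Dx i"; cases "Dy i") (auto simp: eadd_def esub_def)
qed

lemma meet_eadd_meet_right:
  assumes "m \<le> n" "p \<le> q" "n - meet n Dx = p - meet p Dy"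
  shows "meet (n + q - p) (eadd (meet n Dx) (esub Dy (meet p Dy))) =
    meet n Dx + (meet q Dy - meet p Dy)"
proof
  fix i
  have "m i \<le> n i" "p i \<le> q i" "n i - meet n Dx i = p i - meet p Dy i"
    using assms by (auto simp: le_fun_def fun_eq_iff)
  then show "meet (n + q - p) (eadd (meet n Dx) (esub Dy (meet p Dy))) i =
      (meet n Dx + (meet q Dy - meet p Dy)) i"
    by (cases "Dx i"; cases "Dy i"; simp add: eadd_def esub_def min_def split: if_splits; arith)
qed

lemma not_vle_eadd_meet:
  assumes "m \<le> n" "p \<le> q" "n - meet n Dx = p - meet p Dy" "\<not> vle p Dy"
  shows "\<not> vle (n + q - p) (eadd (meet n Dx) (esub Dy (meet p Dy)))"
proof
  obtain i where i: "\<not> enat (p i) \<le> Dy i"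
    using assms(4) by (auto simp: vle_def)
  have "m i \<le> n i" "p i \<le> q i" "n i - meet n Dx i = p i - meet p Dy i"
    using assms by (auto simp: le_fun_def fun_eq_iff)
  moreover assume "vle (n + q - p) (eadd (meet n Dx) (esub Dy (meet p Dy)))"
  then have "enat (n i + q i - p i) \<le> enat (meet n Dx i) + (Dy i - enat (meet p Dy i))"
    by (auto simp: vle_def eadd_def esub_def)
  ultimately show False
    using i by (cases "Dx i"; cases "Dy i") auto
qed

lemma min_add_of_split:
  fixes d :: nat
  assumes "m + a \<le> n" "min n d - min m d = d1 + d2" "d1 + o2 = (m - min m d) + a"
    and "0 < o2 \<Longrightarrow> d2 = 0"
  shows "min (m + a) d = min m d + d1 \<and> m + a - min (m + a) d = o2"
  using assms by (cases "o2 = 0"; simp add: min_def split: if_splits; arith)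

(* Core of the uniqueness argument: d1, d2 are the degrees of the factors of the segment from
   m \<and> D to n \<and> D, and o2 is the overshoot in the key of the second factor. Where o2 is
   positive the second factor is flat, and this pins the cut down to (m + a) \<and> D. *)
lemma meet_add_of_split:
  assumes "m + a \<le> n" "meet n D - meet m D = d1 + d2" "d1 + o2 = (m - meet m D) + a"
    and "\<And>i. 0 < o2 i \<Longrightarrow> d2 i = 0"
  shows "meet (m + a) D = meet m D + d1 \<and> m + a - meet (m + a) D = o2"
proof -
  have "meet (m + a) D i = meet m D i + d1 i \<and> m i + a i - meet (m + a) D i = o2 i" for i
  proof -
    have pointwise: "m i + a i \<le> n i" "meet n D i - meet m D i = d1 i + d2 i"
      "d1 i + o2 i = m i - meet m D i + a i" "0 < o2 i \<Longrightarrow> d2 i = 0"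
      using assms
      by (auto simp: le_fun_def fun_eq_iff simp del: meet_apply_enat meet_apply_infinity)
    show ?thesis
    proof (cases "D i")
      case (enat d)
      then show ?thesis
        using min_add_of_split[of "m i" "a i" "n i" d] pointwise by simp
    next
      case infinity
      then show ?thesis
        using pointwise by (cases "o2 i = 0") auto
    qed
  qed
  then show ?thesis
    by (metis (no_types, lifting) ext minus_apply plus_fun_apply)
qed

section \<open>Unique factorization in a k-graph\<close>

locale k_graph =
  fixes k :: nat and G :: "('v, 'a) kgraph"
  assumes kgraph: "is_kgraph k G"
begin

abbreviation "M \<equiv> kg_mor G"
abbreviation "Ob \<equiv> kg_obj G"
abbreviation "rng \<equiv> kg_rng G"
abbreviation "src \<equiv> kg_src G"
abbreviation "cmp \<equiv> kg_cmp G"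
abbreviation "idm \<equiv> kg_id G"
abbreviation "deg \<equiv> kg_deg G"

lemmas kgraph_props = kgraph[unfolded is_kgraph_def]

lemma id_mor: "v \<in> Ob \<Longrightarrow> idm v \<in> M"
  using kgraph_props by simp

lemma rng_id [simp]: "v \<in> Ob \<Longrightarrow> rng (idm v) = v"
  using kgraph_props by simp

lemma src_id [simp]: "v \<in> Ob \<Longrightarrow> src (idm v) = v"
  using kgraph_props by simp

lemma rng_obj: "l \<in> M \<Longrightarrow> rng l \<in> Ob"
  using kgraph_props by simp

lemma src_obj: "l \<in> M \<Longrightarrow> src l \<in> Ob"
  using kgraph_props by simp

lemma cmp_mor: "l \<in> M \<Longrightarrow> m \<in> M \<Longrightarrow> src l = rng m \<Longrightarrow> cmp l m \<in> M"
  using kgraph_props by simp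

lemma rng_cmp: "l \<in> M \<Longrightarrow> m \<in> M \<Longrightarrow> src l = rng m \<Longrightarrow> rng (cmp l m) = rng l"
  using kgraph_props by simp

lemma src_cmp: "l \<in> M \<Longrightarrow> m \<in> M \<Longrightarrow> src l = rng m \<Longrightarrow> src (cmp l m) = src m"
  using kgraph_props by simp

lemma id_left: "l \<in> M \<Longrightarrow> cmp (idm (rng l)) l = l"
  using kgraph_props by simp

lemma id_right: "l \<in> M \<Longrightarrow> cmp l (idm (src l)) = l"
  using kgraph_props by simp

lemma cmp_assoc:
  "l \<in> M \<Longrightarrow> m \<in> M \<Longrightarrow> n \<in> M \<Longrightarrow> src l = rng m \<Longrightarrow> src m = rng n \<Longrightarrow>
   cmp (cmp l m) n = cmp l (cmp m n)"
  using kgraph_props by simp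

lemma deg_NK: "l \<in> M \<Longrightarrow> deg l \<in> NK k"
  using kgraph_props by simp

lemma deg_cmp: "l \<in> M \<Longrightarrow> m \<in> M \<Longrightarrow> src l = rng m \<Longrightarrow> deg (cmp l m) = deg l + deg m"
  using kgraph_props by simp

lemma unique_factorization:
  "l \<in> M \<Longrightarrow> a \<in> NK k \<Longrightarrow> b \<in> NK k \<Longrightarrow> deg l = a + b \<Longrightarrow>
   \<exists>!p. fst p \<in> M \<and> snd p \<in> M \<and> src (fst p) = rng (snd p) \<and>
        l = cmp (fst p) (snd p) \<and> deg (fst p) = a \<and> deg (snd p) = b"
  using kgraph_props by simp

lemma deg_id: "v \<in> Ob \<Longrightarrow> deg (idm v) = 0"
  using deg_cmp[of "idm v" "idm v"] id_left[of "idm v"] by (simp add: id_mor)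

lemma factorization_cancel:
  assumes "al \<in> M" "be \<in> M" "src al = rng be" "al' \<in> M" "be' \<in> M" "src al' = rng be'"
    and "cmp al be = cmp al' be'" "deg al = deg al'"
  shows "al = al' \<and> be = be'"
proof -
  define P where "P p \<longleftrightarrow> fst p \<in> M \<and> snd p \<in> M \<and> src (fst p) = rng (snd p) \<and>
      cmp al be = cmp (fst p) (snd p) \<and> deg (fst p) = deg al \<and> deg (snd p) = deg be" for p
  have "\<exists>!p. P p"
    unfolding P_def using deg_cmp[OF assms(1-3)]
    by (intro unique_factorization[OF cmp_mor[OF assms(1-3)] deg_NK[OF assms(1)]
      deg_NK[OF assms(2)]])
  moreover have "P (al, be)" "P (al', be')"
    using assms deg_cmp[OF assms(1-3)] deg_cmp[OF assms(4-6)] unfolding P_def by simp_all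
  ultimately show ?thesis
    by (metis ex1E prod.inject)
qed

lemma factorization_exists:
  assumes "l \<in> M" "a \<le> deg l"
  shows "\<exists>al be. al \<in> M \<and> be \<in> M \<and> src al = rng be \<and> l = cmp al be \<and>
    deg al = a \<and> deg be = deg l - a"
proof -
  have "deg l = a + (deg l - a)"
    using assms(2) by (simp add: le_fun_def fun_eq_iff)
  from unique_factorization[OF assms(1) NK_le[OF deg_NK[OF assms(1)] assms(2)]
      NK_diff[OF deg_NK[OF assms(1)]] this]
  show ?thesis by auto
qed

lemma deg_0_imp_id:
  assumes "l \<in> M" "deg l = 0"
  shows "l = idm (rng l)"
proof -
  have "idm (rng l) = l \<and> l = idm (src l)"
    using assms rng_obj[OF assms(1)] src_obj[OF assms(1)]
    by (intro factorization_cancel) (simp_all add: id_mor deg_id id_left id_right)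
  then show ?thesis by simp
qed

lemma mid_eqI:
  assumes "al \<in> M" "nu \<in> M" "be \<in> M" "src al = rng nu" "src nu = rng be"
    and "mu = cmp al (cmp nu be)" "deg al = a" "deg nu = b - a"
  shows "mid G mu a b = nu"
  unfolding mid_def
proof (rule the_equality)
  fix nu' assume "\<exists>al be. al \<in> M \<and> nu' \<in> M \<and> be \<in> M \<and> src al = rng nu' \<and> src nu' = rng be \<and>
      mu = cmp al (cmp nu' be) \<and> deg al = a \<and> deg nu' = b - a"
  then obtain al' be' where h: "al' \<in> M" "nu' \<in> M" "be' \<in> M" "src al' = rng nu'" "src nu' = rng be'"
      "mu = cmp al' (cmp nu' be')" "deg al' = a" "deg nu' = b - a" by blast
  have "al' = al \<and> cmp nu' be' = cmp nu be"
    using h(1,4-7) assms(1,4,6,7) cmp_mor[OF h(2,3,5)] cmp_mor[OF assms(2,3,5)]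
      rng_cmp[OF h(2,3,5)] rng_cmp[OF assms(2,3,5)]
    by (intro factorization_cancel) simp_all
  then have "nu' = nu \<and> be' = be"
    using h(2,3,5,8) assms(2,3,5,8) by (intro factorization_cancel) simp_all
  then show "nu' = nu" by simp
qed (use assms in blast)

lemma mid_factorization:
  assumes "mu \<in> M" "a \<le> b" "b \<le> deg mu"
  shows "mid G mu a b \<in> M \<and> deg (mid G mu a b) = b - a \<and>
    (\<exists>al be. al \<in> M \<and> be \<in> M \<and> src al = rng (mid G mu a b) \<and> src (mid G mu a b) = rng be \<and>
       mu = cmp al (cmp (mid G mu a b) be) \<and> deg al = a \<and> deg be = deg mu - b)"
proof -
  obtain al r where al: "al \<in> M" "r \<in> M" "src al = rng r" "mu = cmp al r" "deg al = a"
      "deg r = deg mu - a"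
    using factorization_exists[OF assms(1) order_trans[OF assms(2,3)]] by blast
  have "b - a \<le> deg r"
    using vec_diff_mono[OF assms(3)] al(6) by simp
  then obtain nu be where nu: "nu \<in> M" "be \<in> M" "src nu = rng be" "r = cmp nu be" "deg nu = b - a"
      "deg be = deg r - (b - a)"
    using factorization_exists[OF al(2)] by blast
  have "deg be i = deg mu i - b i" for i
    using le_funD[OF assms(2), of i] le_funD[OF assms(3), of i] al(6) nu(6) by simp
  then have "deg be = deg mu - b"
    by (simp add: fun_eq_iff)
  moreover have "rng r = rng nu"
    using nu by (simp add: rng_cmp)
  moreover have "mid G mu a b = nu"
    using al nu \<open>rng r = rng nu\<close> by (intro mid_eqI[of al nu be]) simp_all
  ultimately show ?thesis
    using al(1,3,4,5) nu by auto
qed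

lemma mid_mor: "mu \<in> M \<Longrightarrow> a \<le> b \<Longrightarrow> b \<le> deg mu \<Longrightarrow> mid G mu a b \<in> M"
  using mid_factorization by blast

lemma mid_deg: "mu \<in> M \<Longrightarrow> a \<le> b \<Longrightarrow> b \<le> deg mu \<Longrightarrow> deg (mid G mu a b) = b - a"
  using mid_factorization by blast

lemma mid_cmp_mid:
  assumes "mu \<in> M" "a \<le> b" "b \<le> c" "c \<le> deg mu"
  shows "src (mid G mu a b) = rng (mid G mu b c) \<and> cmp (mid G mu a b) (mid G mu b c) = mid G mu a c"
proof -
  define n1 where "n1 = mid G mu a b"
  obtain al be1 where h1: "al \<in> M" "be1 \<in> M" "src al = rng n1" "src n1 = rng be1"
      "mu = cmp al (cmp n1 be1)" "deg al = a" "deg be1 = deg mu - b"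
    and n1: "n1 \<in> M" "deg n1 = b - a"
    using mid_factorization[OF assms(1,2) order_trans[OF assms(3,4)]] unfolding n1_def by blast
  have "c - b \<le> deg be1"
    using vec_diff_mono[OF assms(4)] h1(7) by simp
  then obtain n2 be2
    where h2: "n2 \<in> M" "be2 \<in> M" "src n2 = rng be2" "be1 = cmp n2 be2" "deg n2 = c - b"
    using factorization_exists[OF h1(2)] by blast
  have r1: "src n1 = rng n2"
    using h1(4) h2 by (simp add: rng_cmp)
  have n12: "cmp n1 n2 \<in> M" "rng (cmp n1 n2) = rng n1" "src (cmp n1 n2) = src n2"
    using n1(1) h2(1) r1 by (simp_all add: cmp_mor rng_cmp src_cmp)
  have al1: "cmp al n1 \<in> M" "src (cmp al n1) = src n1"
    using h1(1,3) n1(1) by (simp_all add: cmp_mor src_cmp)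
  have "deg (cmp n1 n2) i = c i - a i" "deg (cmp al n1) i = b i" for i
    using le_funD[OF assms(2), of i] le_funD[OF assms(3), of i] n1 h1 h2 r1
    by (simp_all add: deg_cmp)
  then have degs: "deg (cmp n1 n2) = c - a" "deg (cmp al n1) = b"
    by (simp_all add: fun_eq_iff)
  have "mu = cmp al (cmp (cmp n1 n2) be2)"
    using h1(5) h2 n1(1) r1 by (simp add: cmp_assoc)
  then have "mid G mu a c = cmp n1 n2"
    using h1(1,3,6) h2(2,3) n12 degs(1) by (intro mid_eqI) simp_all
  moreover have "mu = cmp (cmp al n1) (cmp n2 be2)"
    using h1 h2 n1(1) r1 by (simp add: cmp_assoc cmp_mor rng_cmp)
  then have "mid G mu b c = n2"
    using al1 r1 h2 degs(2) by (intro mid_eqI) simp_all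
  ultimately show ?thesis
    using r1 unfolding n1_def by simp
qed

lemma mid_cmp_prefix:
  assumes "m1 \<in> M" "m2 \<in> M" "src m1 = rng m2" "a \<le> b" "b \<le> deg m1"
  shows "mid G (cmp m1 m2) a b = mid G m1 a b"
proof -
  define nu where "nu = mid G m1 a b"
  obtain al be where h: "al \<in> M" "be \<in> M" "src al = rng nu" "src nu = rng be"
      "m1 = cmp al (cmp nu be)" "deg al = a"
    and nu: "nu \<in> M" "deg nu = b - a"
    using mid_factorization[OF assms(1,4,5)] unfolding nu_def by blast
  have nb: "cmp nu be \<in> M" "rng (cmp nu be) = rng nu" "src (cmp nu be) = src be"
    using h nu by (simp_all add: cmp_mor rng_cmp src_cmp)
  have sb: "src be = rng m2"
    using assms(3) h(1,3,5) nb src_cmp[OF h(1) nb(1)] by simp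
  have bm: "cmp be m2 \<in> M" "rng (cmp be m2) = rng be"
    using h(2) assms(2) sb by (simp_all add: cmp_mor rng_cmp)
  have "cmp m1 m2 = cmp al (cmp (cmp nu be) m2)"
    using h(1,3,5) nb assms(2) sb by (simp add: cmp_assoc)
  also have "\<dots> = cmp al (cmp nu (cmp be m2))"
    using h(2,4) nu(1) assms(2) sb by (simp add: cmp_assoc)
  finally have "mid G (cmp m1 m2) a b = nu"
    using mid_eqI[OF h(1) nu(1) bm(1) h(3)] h(4,6) bm(2) nu(2) by simp
  then show ?thesis unfolding nu_def .
qed

lemma mid_cmp_suffix:
  assumes "m1 \<in> M" "m2 \<in> M" "src m1 = rng m2" "deg m1 \<le> a" "a \<le> b" "b \<le> deg m1 + deg m2"
  shows "mid G (cmp m1 m2) a b = mid G m2 (a - deg m1) (b - deg m1)"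
proof -
  define nu where "nu = mid G m2 (a - deg m1) (b - deg m1)"
  have "a - deg m1 \<le> b - deg m1" "b - deg m1 \<le> deg m2"
    using vec_diff_mono[OF assms(5)] assms(6) by (simp_all add: le_fun_def le_diff_conv add.commute)
  then obtain al be where h: "al \<in> M" "be \<in> M" "src al = rng nu" "src nu = rng be"
      "m2 = cmp al (cmp nu be)" "deg al = a - deg m1"
    and nu: "nu \<in> M" "deg nu = (b - deg m1) - (a - deg m1)"
    using mid_factorization[OF assms(2)] unfolding nu_def by blast
  have nb: "cmp nu be \<in> M" "rng (cmp nu be) = rng nu"
    using h nu by (simp_all add: cmp_mor rng_cmp)
  have ra: "rng al = rng m2"
    using h(1,3,5) nb rng_cmp[OF h(1) nb(1)] by simp
  have ma: "cmp m1 al \<in> M" "src (cmp m1 al) = src al"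
    using assms(1,3) h(1) ra by (simp_all add: cmp_mor src_cmp)
  have "cmp m1 m2 = cmp (cmp m1 al) (cmp nu be)"
    using assms(1,3) h(1,3,5) nb ra by (simp add: cmp_assoc)
  moreover have "deg (cmp m1 al) = a" "deg nu = b - a"
    using h nu assms ra by (auto simp: deg_cmp le_fun_def fun_eq_iff)
  ultimately have "mid G (cmp m1 m2) a b = nu"
    using mid_eqI[OF ma(1) nu(1) h(2)] ma(2) h(3,4) by simp
  then show ?thesis unfolding nu_def .
qed

lemma mid_0_deg: "mu \<in> M \<Longrightarrow> mid G mu 0 (deg mu) = mu"
  by (rule mid_eqI[of "idm (rng mu)" mu "idm (src mu)"])
    (auto simp: id_mor id_left id_right deg_id rng_obj src_obj)

lemma mid_same: "mu \<in> M \<Longrightarrow> a \<le> deg mu \<Longrightarrow> mid G mu a a = idm (rng (mid G mu a a))"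
  using deg_0_imp_id mid_mor mid_deg by simp

section \<open>Graph morphisms, shifts and concatenations\<close>

context
  fixes x :: "'a kpath"
  assumes gm: "graph_morphism k G x"
begin

lemma gm_ENK: "fst x \<in> ENK k"
  using gm unfolding graph_morphism_def by blast

lemma gm_mor: "in_Omega k (fst x) p q \<Longrightarrow> snd x p q \<in> M"
  using gm unfolding graph_morphism_def by blast

lemma gm_deg: "in_Omega k (fst x) p q \<Longrightarrow> deg (snd x p q) = q - p"
  using gm unfolding graph_morphism_def by blast

lemma gm_cmp:
  "in_Omega k (fst x) p q \<Longrightarrow> in_Omega k (fst x) q t \<Longrightarrow>
   src (snd x p q) = rng (snd x q t) \<and> cmp (snd x p q) (snd x q t) = snd x p t"
  using gm unfolding graph_morphism_def by blast

lemma gm_id: "in_Omega k (fst x) p p \<Longrightarrow> snd x p p = idm (rng (snd x p p))"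
  using gm unfolding graph_morphism_def by blast

lemma gm_rng: "in_Omega k (fst x) p q \<Longrightarrow> rng (snd x p q) = vtx G x p"
  unfolding vtx_def
  by (metis gm_cmp gm_mor in_Omega_left_refl rng_cmp)

lemma gm_src: "in_Omega k (fst x) p q \<Longrightarrow> src (snd x p q) = vtx G x q"
  unfolding vtx_def using gm_cmp in_Omega_right_refl by blast

lemma gm_mid:
  assumes "in_Omega k (fst x) 0 t" "p \<le> q" "q \<le> t" "p \<in> NK k" "q \<in> NK k"
  shows "snd x p q = mid G (snd x 0 t) p q"
proof -
  have o1: "in_Omega k (fst x) 0 q" "in_Omega k (fst x) q t"
    using in_Omega_split[OF assms(1) _ assms(3,5)] by (auto simp: le_fun_def)
  have o2: "in_Omega k (fst x) 0 p" "in_Omega k (fst x) p q"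
    using in_Omega_split[OF o1(1) _ assms(2,4)] by (auto simp: le_fun_def)
  have o3: "in_Omega k (fst x) p t"
    using in_Omega_trans o2(2) o1(2) by blast
  have c1: "cmp (snd x p q) (snd x q t) = snd x p t" "src (snd x p q) = rng (snd x q t)"
    using gm_cmp[OF o2(2) o1(2)] by simp_all
  have c2: "cmp (snd x 0 p) (snd x p t) = snd x 0 t" "src (snd x 0 p) = rng (snd x p q)"
    using gm_cmp[OF o2(1) o3] gm_cmp[OF o2] by simp_all
  have "snd x 0 t = cmp (snd x 0 p) (cmp (snd x p q) (snd x q t))"
    using c1(1) c2(1) by simp
  moreover have "deg (snd x 0 p) = p"
    using gm_deg[OF o2(1)] by simp
  ultimately show ?thesis
    using mid_eqI[OF gm_mor[OF o2(1)] gm_mor[OF o2(2)] gm_mor[OF o1(2)] c2(2) c1(2)]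
      gm_deg[OF o2(2)]
    by simp
qed

end

lemma boundary_path_gm: "x \<in> boundary_paths k G \<Longrightarrow> graph_morphism k G x"
  unfolding boundary_paths_def by blast

lemma shift_fst [simp]: "fst (shift k p x) = esub (fst x) p"
  unfolding shift_def by simp

lemma shift_Omega:
  assumes "in_Omega k (esub D p) a b" "p \<in> NK k" "vle p D"
  shows "in_Omega k D (a + p) (b + p)"
  using assms vle_add_of_vle_esub unfolding in_Omega_def by (auto simp: NK_add add_right_mono)

lemma shift_val:
  "in_Omega k (esub (fst x) p) a b \<Longrightarrow> snd (shift k p x) a b = snd x (a + p) (b + p)"
  unfolding shift_def restrictP_def by simp

lemma shift_vtx:
  "in_Omega k (esub (fst x) p) a a \<Longrightarrow> vtx G (shift k p x) a = vtx G x (a + p)"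
  unfolding vtx_def using shift_val by metis

lemma shift_gm:
  assumes gm: "graph_morphism k G x" and p: "p \<in> NK k" "vle p (fst x)"
  shows "graph_morphism k G (shift k p x)"
proof -
  note Omega = shift_Omega[OF _ p]
  show ?thesis
    unfolding graph_morphism_def shift_fst
  proof (intro conjI allI impI)
    show "esub (fst x) p \<in> ENK k"
      using esub_ENK[OF gm_ENK[OF gm] p(1)] .
    fix a b
    assume ab: "in_Omega k (esub (fst x) p) a b"
    show "snd (shift k p x) a b \<in> M" "deg (snd (shift k p x) a b) = b - a"
      using shift_val[OF ab] gm_mor[OF gm Omega[OF ab]] gm_deg[OF gm Omega[OF ab]]
      by (simp_all add: fun_eq_iff)
  next
    fix a b t
    assume "in_Omega k (esub (fst x) p) a b \<and> in_Omega k (esub (fst x) p) b t"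
    then have ab: "in_Omega k (esub (fst x) p) a b" and bt: "in_Omega k (esub (fst x) p) b t"
      by auto
    show "src (snd (shift k p x) a b) = rng (snd (shift k p x) b t)"
      "cmp (snd (shift k p x) a b) (snd (shift k p x) b t) = snd (shift k p x) a t"
      using shift_val[OF ab] shift_val[OF bt] shift_val[OF in_Omega_trans[OF ab bt]]
        gm_cmp[OF gm Omega[OF ab] Omega[OF bt]] by simp_all
  next
    fix a
    assume aa: "in_Omega k (esub (fst x) p) a a"
    show "snd (shift k p x) a a = idm (rng (snd (shift k p x) a a))"
      using shift_val[OF aa] gm_id[OF gm Omega[OF aa]] by simp
  next
    fix a b
    assume "\<not> in_Omega k (esub (fst x) p) a b"
    then show "snd (shift k p x) a b = undefined"
      unfolding shift_def restrictP_def by simp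
  qed
qed

lemma shift_bp:
  assumes bp: "x \<in> boundary_paths k G" and p: "p \<in> NK k" "vle p (fst x)"
  shows "shift k p x \<in> boundary_paths k G"
proof -
  obtain nx where nx: "nx \<in> NK k" "vle nx (fst x)"
    "\<forall>q \<in> NK k. \<forall>i < k. nx \<le> q \<and> vle q (fst x) \<and> enat (q i) = fst x i \<longrightarrow>
       {l \<in> M. rng l = vtx G x q \<and> deg l = basis i} = {}"
    using bp unfolding boundary_paths_def by blast
  have "{l \<in> M. rng l = vtx G (shift k p x) q \<and> deg l = basis i} = {}"
    if q: "q \<in> NK k" "i < k" "nx - p \<le> q" "vle q (esub (fst x) p)" "enat (q i) = esub (fst x) p i"
    for q i
  proof -
    have qq: "in_Omega k (esub (fst x) p) q q"
      using q unfolding in_Omega_def by simp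
    have "q + p \<in> NK k" "vle (q + p) (fst x)"
      using shift_Omega[OF qq p] unfolding in_Omega_def by auto
    moreover have "enat ((q + p) i) = fst x i"
      using q(5) p(2) enat_add_eq_of_eq_diff unfolding vle_def esub_def by simp
    ultimately show ?thesis
      using nx(3) q(2) vec_le_add_of_diff_le[OF q(3)] shift_vtx[OF qq] by simp
  qed
  moreover have "nx - p \<in> NK k" "vle (nx - p) (esub (fst x) p)"
    using NK_diff[OF nx(1)] vle_diff_esub[OF nx(2)] by simp_all
  moreover have "graph_morphism k G (shift k p x)"
    using shift_gm[OF boundary_path_gm[OF bp] p] .
  ultimately show ?thesis
    unfolding boundary_paths_def mem_Collect_eq shift_fst by blast
qed

lemma concat_fst [simp]: "fst (concat k G l x) = eadd (deg l) (fst x)"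
  unfolding concat_def Let_def by simp

lemma concat_snd:
  "in_Omega k (eadd (deg l) (fst x)) a b \<Longrightarrow>
   snd (concat k G l x) a b = mid G (cmp l (snd x 0 (b - deg l))) a b"
  unfolding concat_def Let_def restrictP_def vec_sup_diff by simp

context
  fixes l and x :: "'a kpath"
  assumes gm: "graph_morphism k G x" and lM: "l \<in> M" and sl: "src l = vtx G x 0"
begin

(* The morphism \<lambda> x(0, b - d(\<lambda>)) of \<Lambda> has degree b \<squnion> d(\<lambda>), and the segments of the
   concatenation \<lambda> x ending at or below b are its segments. *)
definition concat_initial :: "vec \<Rightarrow> 'a" where
  "concat_initial b = cmp l (snd x 0 (b - deg l))"

lemma concat_initial_Omega:
  "in_Omega k (eadd (deg l) (fst x)) b b \<Longrightarrow> in_Omega k (fst x) 0 (b - deg l)"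
  unfolding in_Omega_def using NK_diff vle_diff_of_vle_eadd by (auto simp: le_fun_def)

lemma concat_initial_mor:
  assumes "in_Omega k (eadd (deg l) (fst x)) b b"
  shows "concat_initial b \<in> M" "b \<le> deg (concat_initial b)"
proof -
  note Omega = concat_initial_Omega[OF assms]
  have "src l = rng (snd x 0 (b - deg l))"
    using gm_rng[OF gm Omega] sl by simp
  then show "concat_initial b \<in> M" "b \<le> deg (concat_initial b)"
    unfolding concat_initial_def
    using cmp_mor[OF lM gm_mor[OF gm Omega]] deg_cmp[OF lM gm_mor[OF gm Omega]] gm_deg[OF gm Omega]
      vec_le_add_diff_self by simp_all
qed

lemma concat_initial_extend:
  assumes "in_Omega k (eadd (deg l) (fst x)) b b" "in_Omega k (eadd (deg l) (fst x)) t t" "b \<le> t"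
  shows "concat_initial t = cmp (concat_initial b) (snd x (b - deg l) (t - deg l))"
    "snd x (b - deg l) (t - deg l) \<in> M"
    "src (concat_initial b) = rng (snd x (b - deg l) (t - deg l))"
proof -
  have o0: "in_Omega k (fst x) 0 (t - deg l)"
    using concat_initial_Omega[OF assms(2)] .
  have "b - deg l \<in> NK k"
    using concat_initial_Omega[OF assms(1)] unfolding in_Omega_def by blast
  then have ob: "in_Omega k (fst x) 0 (b - deg l)" "in_Omega k (fst x) (b - deg l) (t - deg l)"
    using in_Omega_split[OF o0 _ vec_diff_mono[OF assms(3)]] by (auto simp: le_fun_def)
  have c: "src (snd x 0 (b - deg l)) = rng (snd x (b - deg l) (t - deg l))"
    "cmp (snd x 0 (b - deg l)) (snd x (b - deg l) (t - deg l)) = snd x 0 (t - deg l)"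
    using gm_cmp[OF gm ob] by auto
  have r: "src l = rng (snd x 0 (b - deg l))"
    using gm_rng[OF gm ob(1)] sl by simp
  show "concat_initial t = cmp (concat_initial b) (snd x (b - deg l) (t - deg l))"
    unfolding concat_initial_def
    using cmp_assoc[OF lM gm_mor[OF gm ob(1)] gm_mor[OF gm ob(2)] r c(1)] c(2) by simp
  show "snd x (b - deg l) (t - deg l) \<in> M"
    using gm_mor[OF gm ob(2)] .
  show "src (concat_initial b) = rng (snd x (b - deg l) (t - deg l))"
    unfolding concat_initial_def using src_cmp[OF lM gm_mor[OF gm ob(1)] r] c(1) by simp
qed

lemma concat_segment:
  assumes "in_Omega k (eadd (deg l) (fst x)) a b" "in_Omega k (eadd (deg l) (fst x)) t t" "b \<le> t"
  shows "snd (concat k G l x) a b = mid G (concat_initial t) a b"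
proof -
  have bb: "in_Omega k (eadd (deg l) (fst x)) b b"
    using in_Omega_right_refl[OF assms(1)] .
  have "a \<le> b"
    using assms(1) unfolding in_Omega_def by blast
  then have "mid G (concat_initial t) a b = mid G (concat_initial b) a b"
    using concat_initial_extend[OF bb assms(2,3)] concat_initial_mor[OF bb]
    by (simp add: mid_cmp_prefix)
  then show ?thesis
    using concat_snd[OF assms(1)] unfolding concat_initial_def by simp
qed

lemma concat_gm: "graph_morphism k G (concat k G l x)"
  unfolding graph_morphism_def concat_fst
proof (intro conjI allI impI)
  show "eadd (deg l) (fst x) \<in> ENK k"
    using eadd_ENK[OF deg_NK[OF lM] gm_ENK[OF gm]] .
next
  fix a b
  assume ab: "in_Omega k (eadd (deg l) (fst x)) a b"
  note bb = in_Omega_right_refl[OF ab]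
  have "a \<le> b"
    using ab unfolding in_Omega_def by blast
  then show "snd (concat k G l x) a b \<in> M" "deg (snd (concat k G l x) a b) = b - a"
    using concat_segment[OF ab bb order_refl] concat_initial_mor[OF bb] mid_mor mid_deg by simp_all
next
  fix a b t
  assume "in_Omega k (eadd (deg l) (fst x)) a b \<and> in_Omega k (eadd (deg l) (fst x)) b t"
  then have ab: "in_Omega k (eadd (deg l) (fst x)) a b"
    and bt: "in_Omega k (eadd (deg l) (fst x)) b t"
    by auto
  note tt = in_Omega_right_refl[OF bt]
  have "a \<le> b" "b \<le> t"
    using ab bt unfolding in_Omega_def by auto
  then show "src (snd (concat k G l x) a b) = rng (snd (concat k G l x) b t)"
    "cmp (snd (concat k G l x) a b) (snd (concat k G l x) b t) = snd (concat k G l x) a t"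
    using mid_cmp_mid[of "concat_initial t" a b t] concat_initial_mor[OF tt]
      concat_segment[OF ab tt] concat_segment[OF bt tt order_refl]
      concat_segment[OF in_Omega_trans[OF ab bt] tt order_refl]
    by simp_all
next
  fix a
  assume aa: "in_Omega k (eadd (deg l) (fst x)) a a"
  show "snd (concat k G l x) a a = idm (rng (snd (concat k G l x) a a))"
    using concat_segment[OF aa aa order_refl] concat_initial_mor[OF aa] mid_same by simp
next
  fix a b
  assume "\<not> in_Omega k (eadd (deg l) (fst x)) a b"
  then show "snd (concat k G l x) a b = undefined"
    unfolding concat_def restrictP_def Let_def by simp
qed

lemma concat_initial_segment:
  assumes "q \<in> NK k" "vle q (fst x)"
  shows "snd (concat k G l x) 0 (deg l + q) = cmp l (snd x 0 q)"
proof -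
  have o: "in_Omega k (eadd (deg l) (fst x)) 0 (deg l + q)"
    using assms NK_add[OF deg_NK[OF lM]] vle_add_eadd by (simp add: in_Omega_0)
  have oq: "in_Omega k (fst x) 0 q"
    using assms by (simp add: in_Omega_0)
  have r: "src l = rng (snd x 0 q)"
    using gm_rng[OF gm oq] sl by simp
  have "snd (concat k G l x) 0 (deg l + q) = mid G (cmp l (snd x 0 q)) 0 (deg l + q)"
    using concat_snd[OF o] by simp
  also have "\<dots> = cmp l (snd x 0 q)"
    using mid_0_deg[OF cmp_mor[OF lM gm_mor[OF gm oq] r]] deg_cmp[OF lM gm_mor[OF gm oq] r]
      gm_deg[OF gm oq] by simp
  finally show ?thesis .
qed

lemma concat_shifted_segment:
  assumes "in_Omega k (fst x) p q"
  shows "snd (concat k G l x) (deg l + p) (deg l + q) = snd x p q"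
proof -
  have pq: "p \<in> NK k" "q \<in> NK k" "p \<le> q" "vle q (fst x)"
    using assms unfolding in_Omega_def by auto
  have o: "in_Omega k (eadd (deg l) (fst x)) (deg l + p) (deg l + q)"
    using pq NK_add[OF deg_NK[OF lM]] vle_add_eadd unfolding in_Omega_def
    by (simp add: add_left_mono)
  have oq: "in_Omega k (fst x) 0 q"
    using pq by (simp add: in_Omega_0)
  have r: "src l = rng (snd x 0 q)"
    using gm_rng[OF gm oq] sl by simp
  have "snd (concat k G l x) (deg l + p) (deg l + q) =
      mid G (cmp l (snd x 0 q)) (deg l + p) (deg l + q)"
    using concat_snd[OF o] by simp
  also have "\<dots> = mid G (snd x 0 q) p q"
    using mid_cmp_suffix[OF lM gm_mor[OF gm oq] r, of "deg l + p" "deg l + q"]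
      gm_deg[OF gm oq] pq(3)
    by (simp add: le_fun_def)
  also have "\<dots> = snd x p q"
    using gm_mid[OF gm oq pq(3) order_refl pq(1,2)] by simp
  finally show ?thesis .
qed

lemma concat_head_segment:
  assumes "a \<le> deg l" "a \<in> NK k"
  shows "snd (concat k G l x) a (deg l) = mid G l a (deg l)"
proof -
  have o: "in_Omega k (eadd (deg l) (fst x)) a (deg l)"
    using assms deg_NK[OF lM] vle_eadd_of_le[of "deg l"] unfolding in_Omega_def by simp
  have o0: "in_Omega k (fst x) 0 0"
    by (simp add: in_Omega_0)
  have r: "src l = rng (snd x 0 0)"
    using gm_rng[OF gm o0] sl by simp
  have "snd (concat k G l x) a (deg l) = mid G (cmp l (snd x 0 0)) a (deg l)"
    using concat_snd[OF o] by simp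
  also have "\<dots> = mid G l a (deg l)"
    using mid_cmp_prefix[OF lM gm_mor[OF gm o0] r assms(1)] by simp
  finally show ?thesis .
qed

lemma concat_vtx: "in_Omega k (fst x) p p \<Longrightarrow> vtx G (concat k G l x) (deg l + p) = vtx G x p"
  unfolding vtx_def using concat_shifted_segment by simp

end

lemma concat_bp:
  assumes bp: "x \<in> boundary_paths k G" and lM: "l \<in> M" and sl: "src l = vtx G x 0"
  shows "concat k G l x \<in> boundary_paths k G"
proof -
  have gm: "graph_morphism k G x"
    using boundary_path_gm[OF bp] .
  obtain nx where nx: "nx \<in> NK k" "vle nx (fst x)"
    "\<forall>q \<in> NK k. \<forall>i < k. nx \<le> q \<and> vle q (fst x) \<and> enat (q i) = fst x i \<longrightarrow>
       {l \<in> M. rng l = vtx G x q \<and> deg l = basis i} = {}"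
    using bp unfolding boundary_paths_def by blast
  have "{m \<in> M. rng m = vtx G (concat k G l x) q \<and> deg m = basis i} = {}"
    if q: "q \<in> NK k" "i < k" "deg l + nx \<le> q" "vle q (eadd (deg l) (fst x))"
      "enat (q i) = eadd (deg l) (fst x) i"
    for q i
  proof -
    have q_split: "q = deg l + (q - deg l)" "nx \<le> q - deg l"
      using vec_add_le_imp[OF q(3)] by simp_all
    have "q - deg l \<in> NK k" "vle (q - deg l) (fst x)"
      using NK_diff[OF q(1)] vle_diff_of_vle_eadd[OF q(4)] by simp_all
    moreover have "enat ((q - deg l) i) = fst x i"
      using q(5) enat_diff_eq_of_eq_add unfolding eadd_def by simp
    moreover have "vtx G (concat k G l x) q = vtx G x (q - deg l)"
      using concat_vtx[OF gm lM sl, of "q - deg l"] q_split(1) calculation(1,2)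
      unfolding in_Omega_def by simp
    ultimately show ?thesis
      using nx(3) q(2) q_split(2) by simp
  qed
  moreover have "deg l + nx \<in> NK k" "vle (deg l + nx) (eadd (deg l) (fst x))"
    using NK_add[OF deg_NK[OF lM] nx(1)] vle_add_eadd[OF nx(2)] by simp_all
  moreover have "graph_morphism k G (concat k G l x)"
    using concat_gm[OF gm lM sl] .
  ultimately show ?thesis
    unfolding boundary_paths_def mem_Collect_eq concat_fst by blast
qed

context
  fixes l and y :: "'a kpath" and p
  assumes lM: "l \<in> M" and p: "p \<in> NK k" "vle p (fst y)" and sl: "src l = vtx G y p"
begin

lemma concat_shift_src: "src l = vtx G (shift k p y) 0"
  using shift_vtx[of y p 0] sl by (simp add: in_Omega_0)

lemma concat_shift_bp: "y \<in> boundary_paths k G \<Longrightarrow> concat k G l (shift k p y) \<in> boundary_paths k G"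
  using concat_bp[OF shift_bp[OF _ p] lM concat_shift_src] .

lemma concat_shift_initial:
  assumes gm: "graph_morphism k G y" and pq: "in_Omega k (fst y) p q"
  shows "snd (concat k G l (shift k p y)) 0 (deg l + (q - p)) = cmp l (snd y p q)"
proof -
  have "p \<le> q" "q - p \<in> NK k" "vle (q - p) (esub (fst y) p)"
    using pq NK_diff vle_diff_esub unfolding in_Omega_def by auto
  then show ?thesis
    using concat_initial_segment[OF shift_gm[OF gm p] lM concat_shift_src]
      shift_val[of y p 0 "q - p"] vec_diff_add
    by (simp add: in_Omega_0)
qed

lemma concat_shift_tail:
  assumes gm: "graph_morphism k G y" and pq: "in_Omega k (fst y) p q"
  shows "snd (concat k G l (shift k p y)) (deg l) (deg l + (q - p)) = snd y p q"
proof -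
  have "p \<le> q" "q - p \<in> NK k" "vle (q - p) (esub (fst y) p)"
    using pq NK_diff vle_diff_esub unfolding in_Omega_def by auto
  then show ?thesis
    using concat_shifted_segment[OF shift_gm[OF gm p] lM concat_shift_src, of 0 "q - p"]
      shift_val[of y p 0 "q - p"] vec_diff_add by (simp add: in_Omega_0)
qed

end

section \<open>Path classes and their keys\<close>

fun pkey :: "'a kpath \<times> (vec \<times> vec) \<Rightarrow> 'a \<times> vec \<times> vec" where
  "pkey (x, (m, n)) = (snd x (meet m (fst x)) (meet n (fst x)), m - meet m (fst x), n - m)"

fun vkey :: "'a kpath \<times> vec \<Rightarrow> 'v \<times> vec" where
  "vkey (x, m) = (vtx G x (meet m (fst x)), m - meet m (fst x))"

definition pclass :: "'a \<times> vec \<times> vec \<Rightarrow> ('a kpath \<times> (vec \<times> vec)) set" where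
  "pclass K = {e \<in> PL k G. pkey e = K}"

(* For e = (x, (m, n)) in PL this is the morphism [x;(m,n)] of the extension. *)
abbreviation path_arrow :: "'a kpath \<times> (vec \<times> vec) \<Rightarrow> 'a bar_arrow" where
  "path_arrow e \<equiv> Inr (pclass (pkey e))"

lemma Prel_Image: "e \<in> PL k G \<Longrightarrow> Prel k G `` {e} = pclass (pkey e)"
  unfolding pclass_def Prel_def by (cases e) auto

lemma Vrel_Image: "v \<in> VL k G \<Longrightarrow> Vrel k G `` {v} = {w \<in> VL k G. vkey w = vkey v}"
  unfolding Vrel_def by (cases v) auto

lemma Vrel_Image_eq_iff:
  assumes "v \<in> VL k G" "w \<in> VL k G"
  shows "Vrel k G `` {v} = Vrel k G `` {w} \<longleftrightarrow> vkey v = vkey w"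
proof
  assume eq: "Vrel k G `` {v} = Vrel k G `` {w}"
  have "v \<in> Vrel k G `` {v}"
    using Vrel_Image[OF assms(1)] assms(1) by simp
  then have "v \<in> Vrel k G `` {w}"
    using eq by simp
  then show "vkey v = vkey w"
    using Vrel_Image[OF assms(2)] by simp
qed (simp add: Vrel_Image assms)

lemma bar_mor_iff:
  "f \<in> bar_mor k G \<longleftrightarrow> (\<exists>l \<in> M. f = Inl l) \<or> (\<exists>e \<in> PL k G. f = path_arrow e)"
  unfolding bar_mor_def quotient_def using Prel_Image by auto

lemma pclass_rep:
  assumes "e \<in> PL k G"
  obtains x m n where "rep (pclass (pkey e)) = (x, (m, n))" "(x, (m, n)) \<in> PL k G"
    "pkey (x, (m, n)) = pkey e"
proof -
  have "e \<in> pclass (pkey e)"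
    using assms unfolding pclass_def by simp
  then have "rep (pclass (pkey e)) \<in> pclass (pkey e)"
    unfolding rep_def by (rule someI)
  then show ?thesis
    using that unfolding pclass_def by (metis (mono_tags) mem_Collect_eq prod_cases3)
qed

lemma pclass_eq_imp_pkey_eq: "e \<in> PL k G \<Longrightarrow> pclass (pkey e) = pclass K \<Longrightarrow> pkey e = K"
  unfolding pclass_def by blast

lemma PL_D:
  assumes "(x, (m, n)) \<in> PL k G"
  shows "x \<in> boundary_paths k G" "graph_morphism k G x" "m \<in> NK k" "n \<in> NK k" "m \<le> n"
    "\<not> vle n (fst x)" "in_Omega k (fst x) (meet m (fst x)) (meet n (fst x))"
  using assms unfolding PL_def boundary_paths_def in_Omega_def
  by (auto simp: meet_NK meet_mono meet_vle)

lemma PL_segment: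
  assumes "(x, (m, n)) \<in> PL k G"
  shows "snd x (meet m (fst x)) (meet n (fst x)) \<in> M"
    "deg (snd x (meet m (fst x)) (meet n (fst x))) = meet n (fst x) - meet m (fst x)"
    "rng (snd x (meet m (fst x)) (meet n (fst x))) = vtx G x (meet m (fst x))"
    "src (snd x (meet m (fst x)) (meet n (fst x))) = vtx G x (meet n (fst x))"
  using gm_mor gm_deg gm_rng gm_src PL_D(2,7)[OF assms] by simp_all

lemma pkey_segment:
  assumes "(x, (m, n)) \<in> PL k G" "pkey (x, (m, n)) = (s, off, len)"
  shows "s \<in> M" "deg s + (n - meet n (fst x)) = off + len" "0 < off i \<Longrightarrow> deg s i = 0"
  using assms PL_segment(1,2)[OF assms(1)] meet_offset_add[OF PL_D(5)[OF assms(1)]]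
    meet_diff_eq_0_if_offset[OF PL_D(5)[OF assms(1)]] by auto

lemma vkey_start:
  "(x, (m, n)) \<in> PL k G \<Longrightarrow> pkey (x, (m, n)) = (s, off, len) \<Longrightarrow> vkey (x, m) = (rng s, off)"
  using PL_segment(3) by auto

lemma vkey_end:
  assumes "(x, (m, n)) \<in> PL k G" "pkey (x, (m, n)) = (s, off, len)"
  shows "vkey (x, n) = (src s, off + len - deg s)"
  using assms PL_segment(4)[OF assms(1)] vec_eq_diff_of_add_eq[OF pkey_segment(2)[OF assms]] by auto

lemma VL_end: "(x, (m, n)) \<in> PL k G \<Longrightarrow> (x, n) \<in> VL k G"
  unfolding PL_def VL_def by simp

lemma VL_start: "(x, (m, n)) \<in> PL k G \<Longrightarrow> \<not> vle m (fst x) \<Longrightarrow> (x, m) \<in> VL k G"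
  unfolding PL_def VL_def by simp

lemma vle_iff_pkey_offset: "pkey (x, (m, n)) = (s, off, len) \<Longrightarrow> vle m (fst x) \<longleftrightarrow> off = 0"
  using vle_iff_meet_offset by auto

lemma concat_mor_PL:
  assumes lM: "l \<in> M" and e: "(y, (p, q)) \<in> PL k G" and vp: "vle p (fst y)"
    and sl: "src l = vtx G y p"
  shows "(concat k G l (shift k p y), (0, deg l + q - p)) \<in> PL k G"
    "pkey (concat k G l (shift k p y), (0, deg l + q - p)) =
      (cmp l (snd y p (meet q (fst y))), 0, deg l + (q - p))"
proof -
  note P = PL_D[OF e]
  have "\<not> vle (deg l + q - p) (fst (concat k G l (shift k p y)))"
    using not_vle_eadd_esub[OF P(5) vp P(6)] by simp
  then show "(concat k G l (shift k p y), (0, deg l + q - p)) \<in> PL k G"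
    unfolding PL_def
    using concat_shift_bp[OF lM P(3) vp sl P(1)] NK_diff NK_add[OF deg_NK[OF lM] P(4)]
    by (simp add: le_fun_def)
  have "in_Omega k (fst y) p (meet q (fst y))"
    using P(7) meet_id[OF vp] by simp
  moreover have
    "meet (deg l + q - p) (fst (concat k G l (shift k p y))) = deg l + (meet q (fst y) - p)"
    using meet_eadd_esub[OF P(5) vp] by simp
  moreover have "deg l + q - p = deg l + (q - p)"
    using P(5) by (simp add: le_fun_def fun_eq_iff)
  ultimately show "pkey (concat k G l (shift k p y), (0, deg l + q - p)) =
      (cmp l (snd y p (meet q (fst y))), 0, deg l + (q - p))"
    using concat_shift_initial[OF lM P(3) vp sl P(2)] by simp
qed

lemma PL_prefix:
  assumes "(x, (m, n)) \<in> PL k G"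
  shows "snd x 0 (meet n (fst x)) \<in> M" "deg (snd x 0 (meet n (fst x))) = meet n (fst x)"
    "src (snd x 0 (meet n (fst x))) = vtx G x (meet n (fst x))"
proof -
  have "in_Omega k (fst x) 0 (meet n (fst x))"
    using in_Omega_right_refl[OF PL_D(7)[OF assms]] by (simp add: in_Omega_def le_fun_def)
  then show "snd x 0 (meet n (fst x)) \<in> M" "deg (snd x 0 (meet n (fst x))) = meet n (fst x)"
    "src (snd x 0 (meet n (fst x))) = vtx G x (meet n (fst x))"
    using gm_mor gm_deg gm_src PL_D(2)[OF assms] by simp_all
qed

lemma concat_path_PL:
  assumes e1: "(x, (m, n)) \<in> PL k G" and e2: "(y, (p, q)) \<in> PL k G" and np: "\<not> vle p (fst y)"
    and vk: "vkey (x, n) = vkey (y, p)"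
  shows "(concat k G (snd x 0 (meet n (fst x))) (shift k (meet p (fst y)) y), (m, n + q - p))
    \<in> PL k G"
proof -
  note P1 = PL_D[OF e1] and P2 = PL_D[OF e2]
  have off: "n - meet n (fst x) = p - meet p (fst y)"
    using vk by simp
  have "concat k G (snd x 0 (meet n (fst x))) (shift k (meet p (fst y)) y) \<in> boundary_paths k G"
    using concat_shift_bp[OF PL_prefix(1)[OF e1] meet_NK[OF P2(3)] meet_vle _ P2(1)]
      PL_prefix(3)[OF e1] vk
    by simp
  moreover have "\<not> vle (n + q - p)
      (fst (concat k G (snd x 0 (meet n (fst x))) (shift k (meet p (fst y)) y)))"
    using not_vle_eadd_meet[OF P1(5) P2(5) off np] PL_prefix(2)[OF e1] by simp
  ultimately show ?thesis
    unfolding PL_def using P1(3) NK_diff[OF NK_add[OF P1(4) P2(4)]] vec_le_add_diff[OF P1(5) P2(5)]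
    by simp
qed

lemma pkey_concat_path:
  assumes e1: "(x, (m, n)) \<in> PL k G" and e2: "(y, (p, q)) \<in> PL k G" and np: "\<not> vle p (fst y)"
    and vk: "vkey (x, n) = vkey (y, p)"
  defines "z \<equiv> concat k G (snd x 0 (meet n (fst x))) (shift k (meet p (fst y)) y)"
  shows "pkey (z, (m, n + q - p)) =
      (cmp (snd x (meet m (fst x)) (meet n (fst x))) (snd y (meet p (fst y)) (meet q (fst y))),
       m - meet m (fst x), (n - m) + (q - p))"
proof -
  note P1 = PL_D[OF e1] and P2 = PL_D[OF e2]
  define mm where "mm = meet m (fst x)"
  define nn where "nn = meet n (fst x)"
  define pp where "pp = meet p (fst y)"
  define qq where "qq = meet q (fst y)"
  note lam = PL_prefix[OF e1, folded nn_def]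
  have off: "n - nn = p - pp" and sl: "src (snd x 0 nn) = vtx G y pp"
    using vk lam(3) unfolding nn_def pp_def by simp_all
  have pp: "pp \<in> NK k" "vle pp (fst y)"
    unfolding pp_def using meet_NK[OF P2(3)] meet_vle by simp_all
  have mz: "meet m (fst z) = mm" and nz: "meet (n + q - p) (fst z) = nn + (qq - pp)"
    using meet_eadd_meet_left[OF P1(5) off[unfolded nn_def pp_def]] lam(2)
      meet_eadd_meet_right[OF P1(5) P2(5) off[unfolded nn_def pp_def]]
    unfolding z_def mm_def nn_def pp_def qq_def by simp_all
  have mmnn: "mm \<le> nn" "mm \<in> NK k" "nn \<in> NK k"
    unfolding mm_def nn_def using meet_mono[OF P1(5)] meet_NK P1(3,4) by simp_all
  have "in_Omega k (fst z) mm (nn + (qq - pp))"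
    using PL_D(7)[OF concat_path_PL[OF e1 e2 np vk, folded z_def]] mz nz by simp
  then have oz: "in_Omega k (fst z) mm nn" "in_Omega k (fst z) nn (nn + (qq - pp))"
    using in_Omega_split[OF _ mmnn(1) _ mmnn(3)] by (auto simp: le_fun_def)
  have "snd z mm nn = mid G (snd x 0 nn) mm nn"
    unfolding z_def
    using concat_head_segment[OF shift_gm[OF P2(2) pp] lam(1) concat_shift_src[OF lam(1) pp sl]]
      lam(2) mmnn unfolding nn_def pp_def by simp
  also have "\<dots> = snd x mm nn"
    using gm_mid[OF P1(2) _ mmnn(1) order_refl mmnn(2,3)] in_Omega_0[OF mmnn(3)] meet_vle
    unfolding nn_def by simp
  finally have z1: "snd z mm nn = snd x mm nn" .
  have z2: "snd z nn (nn + (qq - pp)) = snd y pp qq"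
    using concat_shift_tail[OF lam(1) pp sl P2(2)] P2(7) lam(2) unfolding z_def pp_def qq_def nn_def
    by simp
  have gm_z: "graph_morphism k G z"
    using boundary_path_gm PL_D(1)[OF concat_path_PL[OF e1 e2 np vk, folded z_def]] by blast
  show ?thesis
    using mz nz gm_cmp[OF gm_z oz] z1 z2 vec_add_diff_diff[OF P1(5) P2(5)]
    unfolding mm_def nn_def pp_def qq_def by simp
qed

lemma vkey_eq_of_pkey_eq:
  assumes "(x, (m, n)) \<in> PL k G" "(x', (m', n')) \<in> PL k G" "pkey (x', (m', n')) = pkey (x, (m, n))"
  shows "vkey (x', m') = vkey (x, m)" "vkey (x', n') = vkey (x, n)"
proof -
  obtain s off len where key: "pkey (x, (m, n)) = (s, off, len)"
    using prod_cases3 by blast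
  show "vkey (x', m') = vkey (x, m)" "vkey (x', n') = vkey (x, n)"
    using vkey_start[OF assms(1) key] vkey_end[OF assms(1) key] assms(3) key
      vkey_start[OF assms(2)] vkey_end[OF assms(2)] by simp_all
qed

lemma bar_deg_pclass:
  assumes "e \<in> PL k G" "pkey e = (s, off, len)"
  shows "bar_deg k G (path_arrow e) = len"
proof -
  obtain x m n where "rep (pclass (pkey e)) = (x, (m, n))" "pkey (x, (m, n)) = pkey e"
    using pclass_rep[OF assms(1)] by blast
  then show ?thesis
    using assms(2) by (simp add: bar_deg_def)
qed

lemma bar_src_pclass:
  assumes e: "(x, (m, n)) \<in> PL k G"
  shows "bar_src k G (path_arrow (x, (m, n))) = Inr (Vrel k G `` {(x, n)})"
proof -
  obtain x' m' n' where r: "rep (pclass (pkey (x, (m, n)))) = (x', (m', n'))"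
    "(x', (m', n')) \<in> PL k G" "pkey (x', (m', n')) = pkey (x, (m, n))"
    using pclass_rep[OF e] by blast
  have "Vrel k G `` {(x', n')} = Vrel k G `` {(x, n)}"
    using Vrel_Image_eq_iff[OF VL_end[OF r(2)] VL_end[OF e]] vkey_eq_of_pkey_eq(2)[OF e r(2,3)]
    by simp
  then show ?thesis
    unfolding bar_src_def using r(1) by simp
qed

lemma bar_rng_pclass:
  assumes e: "(x, (m, n)) \<in> PL k G"
  shows "bar_rng k G (path_arrow (x, (m, n))) =
    (if vle m (fst x) then Inl (vtx G x m) else Inr (Vrel k G `` {(x, m)}))"
proof -
  obtain x' m' n' where r: "rep (pclass (pkey (x, (m, n)))) = (x', (m', n'))"
    "(x', (m', n')) \<in> PL k G" "pkey (x', (m', n')) = pkey (x, (m, n))"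
    using pclass_rep[OF e] by blast
  have vle_iff: "vle m' (fst x') \<longleftrightarrow> vle m (fst x)"
    using r(3) vle_iff_meet_offset by auto
  have vkey_eq: "vkey (x', m') = vkey (x, m)"
    using vkey_eq_of_pkey_eq(1)[OF e r(2,3)] .
  show ?thesis
  proof (cases "vle m (fst x)")
    case True
    then show ?thesis
      unfolding bar_rng_def using r(1) vle_iff vkey_eq by (simp add: meet_id)
  next
    case False
    then have "Vrel k G `` {(x', m')} = Vrel k G `` {(x, m)}"
      using Vrel_Image_eq_iff[OF VL_start[OF r(2)] VL_start[OF e]] vle_iff vkey_eq by simp
    then show ?thesis
      unfolding bar_rng_def using r(1) vle_iff False by simp
  qed
qed

lemma bar_cmp_mor_pclass:
  assumes lM: "l \<in> M" and e: "(y, (p, q)) \<in> PL k G" and key: "pkey (y, (p, q)) = (s, off, len)"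
    and st: "bar_src k G (Inl l) = bar_rng k G (path_arrow (y, (p, q)))"
  shows "off = 0" "src l = rng s"
    "bar_cmp k G (Inl l) (path_arrow (y, (p, q))) = Inr (pclass (cmp l s, 0, deg l + len))"
proof -
  have vp: "vle p (fst y)" and sl: "src l = vtx G y p"
    using st unfolding bar_rng_pclass[OF e] bar_src_def by (auto split: if_splits)
  show "off = 0" "src l = rng s"
    using vle_iff_pkey_offset[OF key] vp sl vkey_start[OF e key] meet_id[OF vp] by simp_all
  obtain y' p' q' where r: "rep (pclass (pkey (y, (p, q)))) = (y', (p', q'))"
    "(y', (p', q')) \<in> PL k G" "pkey (y', (p', q')) = pkey (y, (p, q))"
    using pclass_rep[OF e] by blast
  have vp': "vle p' (fst y')"
    using r(3) key vp by (metis vle_iff_pkey_offset)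
  have sl': "src l = vtx G y' p'"
    using vkey_eq_of_pkey_eq(1)[OF e r(2,3)] sl meet_id[OF vp] meet_id[OF vp'] by simp
  note comp = concat_mor_PL[OF lM r(2) vp' sl']
  have "bar_cmp k G (Inl l) (path_arrow (y, (p, q))) =
      Inr (Prel k G `` {(concat k G l (shift k p' y'), (0, deg l + q' - p'))})"
    unfolding bar_cmp_def using r(1) by simp
  also have "\<dots> = Inr (pclass (cmp l s, 0, deg l + len))"
  proof -
    have "snd y' p' (meet q' (fst y')) = s" "q' - p' = len"
      using r(3) key meet_id[OF vp'] by auto
    then show ?thesis
      by (simp only: Prel_Image[OF comp(1)] comp(2))
  qed
  finally show
    "bar_cmp k G (Inl l) (path_arrow (y, (p, q))) = Inr (pclass (cmp l s, 0, deg l + len))" .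
qed

lemma bar_cmp_pclass_pclass:
  assumes e1: "(x, (m, n)) \<in> PL k G" and e2: "(y, (p, q)) \<in> PL k G"
    and key1: "pkey (x, (m, n)) = (s1, off1, len1)" and key2: "pkey (y, (p, q)) = (s2, off2, len2)"
    and st: "bar_src k G (path_arrow (x, (m, n))) = bar_rng k G (path_arrow (y, (p, q)))"
  shows "off2 \<noteq> 0" "src s1 = rng s2" "off1 + len1 - deg s1 = off2"
    "bar_cmp k G (path_arrow (x, (m, n))) (path_arrow (y, (p, q))) =
      Inr (pclass (cmp s1 s2, off1, len1 + len2))"
proof -
  have np: "\<not> vle p (fst y)" and "Vrel k G `` {(x, n)} = Vrel k G `` {(y, p)}"
    using st unfolding bar_src_pclass[OF e1] bar_rng_pclass[OF e2] by (auto split: if_splits)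
  then have vk: "vkey (x, n) = vkey (y, p)"
    using Vrel_Image_eq_iff[OF VL_end[OF e1] VL_start[OF e2 np]] by simp
  show "off2 \<noteq> 0" "src s1 = rng s2" "off1 + len1 - deg s1 = off2"
    using np vle_iff_pkey_offset[OF key2] vk vkey_end[OF e1 key1] vkey_start[OF e2 key2] by simp_all
  obtain x' m' n' where r1: "rep (pclass (pkey (x, (m, n)))) = (x', (m', n'))"
    "(x', (m', n')) \<in> PL k G" "pkey (x', (m', n')) = pkey (x, (m, n))"
    using pclass_rep[OF e1] by blast
  obtain y' p' q' where r2: "rep (pclass (pkey (y, (p, q)))) = (y', (p', q'))"
    "(y', (p', q')) \<in> PL k G" "pkey (y', (p', q')) = pkey (y, (p, q))"
    using pclass_rep[OF e2] by blast
  have np': "\<not> vle p' (fst y')"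
    using r2(3) np key2 by (metis vle_iff_pkey_offset)
  have vk': "vkey (x', n') = vkey (y', p')"
    using vk vkey_eq_of_pkey_eq(2)[OF e1 r1(2,3)] vkey_eq_of_pkey_eq(1)[OF e2 r2(2,3)] by simp
  note comp = concat_path_PL[OF r1(2) r2(2) np' vk'] pkey_concat_path[OF r1(2) r2(2) np' vk']
  have "bar_cmp k G (path_arrow (x, (m, n))) (path_arrow (y, (p, q))) =
      Inr (Prel k G `` {(concat k G (snd x' 0 (meet n' (fst x'))) (shift k (meet p' (fst y')) y'),
        (m', n' + q' - p'))})"
    unfolding bar_cmp_def using r1(1) r2(1) by simp
  also have "\<dots> = Inr (pclass (cmp s1 s2, off1, len1 + len2))"
  proof -
    have "snd x' (meet m' (fst x')) (meet n' (fst x')) = s1" "m' - meet m' (fst x') = off1"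
      "n' - m' = len1"
      "snd y' (meet p' (fst y')) (meet q' (fst y')) = s2" "q' - p' = len2"
      using r1(3) r2(3) key1 key2 by auto
    then show ?thesis
      by (simp only: Prel_Image[OF comp(1)] comp(2))
  qed
  finally show "bar_cmp k G (path_arrow (x, (m, n))) (path_arrow (y, (p, q))) =
      Inr (pclass (cmp s1 s2, off1, len1 + len2))" .
qed

section \<open>Factorization in the extension\<close>

definition bar_factorization ::
    "'a bar_arrow \<Rightarrow> vec \<Rightarrow> vec \<Rightarrow> 'a bar_arrow \<times> 'a bar_arrow \<Rightarrow> bool" where
  "bar_factorization f a b gh \<longleftrightarrow> fst gh \<in> bar_mor k G \<and> snd gh \<in> bar_mor k G \<and>
     bar_src k G (fst gh) = bar_rng k G (snd gh) \<and> f = bar_cmp k G (fst gh) (snd gh) \<and>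
     bar_deg k G (fst gh) = a \<and> bar_deg k G (snd gh) = b"

lemma bar_cmp_Inr_right: "\<exists>c'. bar_cmp k G f (Inr c) = Inr c'"
  by (cases f) (auto simp: bar_cmp_def split: prod.split)

lemma bar_src_Inr: "\<exists>c'. bar_src k G (Inr c) = Inr c'"
  by (auto simp: bar_src_def split: prod.split)

(* bar_cmp of a path class with a morphism of \<Lambda> is undefined, so only composability rules
   this case out. *)
lemma bar_factorization_Inr_left:
  assumes "bar_factorization f a b (Inr c, h)"
  obtains c' where "h = Inr c'"
proof (cases h)
  case (Inl l)
  obtain c' where "bar_src k G (Inr c) = Inr c'"
    using bar_src_Inr by blast
  then show ?thesis
    using assms Inl unfolding bar_factorization_def bar_rng_def by simp
qed

lemma bar_factorization_right_pclass:
  assumes fac: "bar_factorization (Inr c) a b (g, h)"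
  obtains y p q where "(y, (p, q)) \<in> PL k G" "h = path_arrow (y, (p, q))"
proof -
  have "h \<notin> range Inl"
  proof (cases g)
    case (Inl g')
    then show ?thesis
      using fac by (auto simp: bar_factorization_def bar_cmp_def)
  next
    case (Inr c)
    then show ?thesis
      using fac bar_factorization_Inr_left by blast
  qed
  then obtain e2 where "e2 \<in> PL k G" "h = path_arrow e2"
    using fac unfolding bar_factorization_def bar_mor_iff by auto
  moreover obtain y p q where "e2 = (y, (p, q))"
    by (cases e2) auto
  ultimately show ?thesis
    using that by simp
qed

lemma bar_factorization_mor:
  assumes lM: "l \<in> M" and a: "a \<in> NK k" and b: "b \<in> NK k" and d: "deg l = a + b"
  shows "\<exists>!gh. bar_factorization (Inl l) a b gh"
proof -
  obtain p where p: "fst p \<in> M" "snd p \<in> M" "src (fst p) = rng (snd p)" "l = cmp (fst p) (snd p)"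
    "deg (fst p) = a" "deg (snd p) = b"
    using unique_factorization[OF lM a b d] by blast
  have "bar_factorization (Inl l) a b (Inl (fst p), Inl (snd p))"
    unfolding bar_factorization_def bar_mor_def bar_src_def bar_rng_def bar_cmp_def bar_deg_def
    using p by simp
  moreover have "gh = (Inl (fst p), Inl (snd p))" if fac: "bar_factorization (Inl l) a b gh" for gh
  proof -
    obtain g h where gh: "gh = (g, h)"
      by fastforce
    have "Inl l = bar_cmp k G g h"
      using fac unfolding gh bar_factorization_def by simp
    then obtain h' where h: "h = Inl h'"
      by (metis bar_cmp_Inr_right sum.distinct(1) sum.exhaust)
    obtain g' where g: "g = Inl g'"
      using fac bar_factorization_Inr_left[of "Inl l" a b] h unfolding gh by (cases g) force+
    have "g' \<in> M" "h' \<in> M" "src g' = rng h'" "l = cmp g' h'" "deg g' = a"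
      using fac unfolding gh g h bar_factorization_def bar_mor_def bar_src_def bar_rng_def
        bar_cmp_def bar_deg_def by auto
    then have "g' = fst p \<and> h' = snd p"
      using factorization_cancel p by metis
    then show ?thesis
      using gh g h by simp
  qed
  ultimately show ?thesis
    by blast
qed

definition canonical_factors :: "'a kpath \<Rightarrow> vec \<Rightarrow> vec \<Rightarrow> vec \<Rightarrow> 'a bar_arrow \<times> 'a bar_arrow" where
  "canonical_factors x m a n =
     (if vle (m + a) (fst x) then Inl (snd x m (m + a)) else path_arrow (x, (m, m + a)),
      path_arrow (x, (m + a, n)))"

context
  fixes x m n a b
  assumes e: "(x, (m, n)) \<in> PL k G" and a: "a \<in> NK k" and len: "n - m = a + b"
begin

lemma cut_le: "m + a \<le> n" "n - (m + a) = b"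
  using vec_split_interval[OF len PL_D(5)[OF e]] by simp_all

lemma PL_cut_right: "(x, (m + a, n)) \<in> PL k G"
  using e NK_add[OF PL_D(3)[OF e] a] cut_le(1) unfolding PL_def by simp

lemma PL_cut_left: "\<not> vle (m + a) (fst x) \<Longrightarrow> (x, (m, m + a)) \<in> PL k G"
  using e NK_add[OF PL_D(3)[OF e] a] unfolding PL_def by (simp add: le_fun_def)

lemma canonical_factorization_mor:
  assumes vma: "vle (m + a) (fst x)"
  shows "bar_factorization (path_arrow (x, (m, n))) a b (canonical_factors x m a n)"
proof -
  note gm = PL_D(2)[OF e]
  define nn where "nn = meet n (fst x)"
  have vm: "vle m (fst x)"
    using vle_le_trans[OF _ vma] by (simp add: le_fun_def)
  have om: "in_Omega k (fst x) m (m + a)"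
    using PL_D(3)[OF e] NK_add[OF PL_D(3)[OF e] a] vma unfolding in_Omega_def
    by (simp add: le_fun_def)
  have oan: "in_Omega k (fst x) (m + a) nn"
    using PL_D(7)[OF PL_cut_right] meet_id[OF vma] unfolding nn_def by simp
  have key2: "pkey (x, (m + a, n)) = (snd x (m + a) nn, 0, b)"
    using meet_id[OF vma] cut_le(2) unfolding nn_def by simp
  have st: "bar_src k G (Inl (snd x m (m + a))) = bar_rng k G (path_arrow (x, (m + a, n)))"
    unfolding bar_rng_pclass[OF PL_cut_right] bar_src_def using vma gm_src[OF gm om] by simp
  have "bar_cmp k G (Inl (snd x m (m + a))) (path_arrow (x, (m + a, n))) =
      Inr (pclass (cmp (snd x m (m + a)) (snd x (m + a) nn), 0, deg (snd x m (m + a)) + b))"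
    using bar_cmp_mor_pclass(3)[OF gm_mor[OF gm om] PL_cut_right key2 st] .
  also have "\<dots> = path_arrow (x, (m, n))"
    using gm_cmp[OF gm om oan] gm_deg[OF gm om] meet_id[OF vm] len unfolding nn_def by simp
  finally have "bar_cmp k G (Inl (snd x m (m + a))) (path_arrow (x, (m + a, n))) =
      path_arrow (x, (m, n))" .
  moreover have "Inl (snd x m (m + a)) \<in> bar_mor k G" "path_arrow (x, (m + a, n)) \<in> bar_mor k G"
    using gm_mor[OF gm om] PL_cut_right unfolding bar_mor_iff by blast+
  ultimately show ?thesis
    unfolding bar_factorization_def canonical_factors_def
    using vma st gm_deg[OF gm om] bar_deg_pclass[OF PL_cut_right key2] by (simp add: bar_deg_def)
qed

lemma canonical_factorization_pclass:
  assumes nva: "\<not> vle (m + a) (fst x)"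
  shows "bar_factorization (path_arrow (x, (m, n))) a b (canonical_factors x m a n)"
proof -
  note gm = PL_D(2)[OF e]
  define mm where "mm = meet m (fst x)"
  define ma where "ma = meet (m + a) (fst x)"
  define nn where "nn = meet n (fst x)"
  have key1: "pkey (x, (m, m + a)) = (snd x mm ma, m - mm, a)"
    unfolding mm_def ma_def by simp
  have key2: "pkey (x, (m + a, n)) = (snd x ma nn, m + a - ma, b)"
    using cut_le(2) unfolding ma_def nn_def by simp
  have st: "bar_src k G (path_arrow (x, (m, m + a))) = bar_rng k G (path_arrow (x, (m + a, n)))"
    unfolding bar_src_pclass[OF PL_cut_left[OF nva]] bar_rng_pclass[OF PL_cut_right] using nva by simp
  have o1: "in_Omega k (fst x) mm ma" and o2: "in_Omega k (fst x) ma nn"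
    using PL_D(7)[OF PL_cut_left[OF nva]] PL_D(7)[OF PL_cut_right] unfolding mm_def ma_def nn_def
    by simp_all
  have "bar_cmp k G (path_arrow (x, (m, m + a))) (path_arrow (x, (m + a, n))) =
      Inr (pclass (cmp (snd x mm ma) (snd x ma nn), m - mm, a + b))"
    using bar_cmp_pclass_pclass(4)[OF PL_cut_left[OF nva] PL_cut_right key1 key2 st] .
  also have "\<dots> = path_arrow (x, (m, n))"
    using gm_cmp[OF gm o1 o2] len unfolding mm_def nn_def by simp
  finally have "bar_cmp k G (path_arrow (x, (m, m + a))) (path_arrow (x, (m + a, n))) =
      path_arrow (x, (m, n))" .
  moreover have "path_arrow (x, (m, m + a)) \<in> bar_mor k G"
    "path_arrow (x, (m + a, n)) \<in> bar_mor k G"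
    using PL_cut_left[OF nva] PL_cut_right unfolding bar_mor_iff by blast+
  ultimately show ?thesis
    unfolding bar_factorization_def canonical_factors_def
    using nva st bar_deg_pclass[OF PL_cut_right key2] bar_deg_pclass[OF PL_cut_left[OF nva] key1]
    by (simp del: pkey.simps)
qed

lemma canonical_factorization:
  "bar_factorization (path_arrow (x, (m, n))) a b (canonical_factors x m a n)"
  using canonical_factorization_mor canonical_factorization_pclass by blast

lemma factorization_keys_mor_pclass:
  assumes g: "g \<in> M" and e2: "(y, (p, q)) \<in> PL k G" and key2: "pkey (y, (p, q)) = (s2, off2, len2)"
    and fac: "bar_factorization (path_arrow (x, (m, n))) a b
      (Inl g, path_arrow (y, (p, q)))"
  shows "deg g = a" "len2 = b" "off2 = 0" "src g = rng s2" "pkey (x, (m, n)) = (cmp g s2, 0, a + b)"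
proof -
  have st: "bar_src k G (Inl g) = bar_rng k G (path_arrow (y, (p, q)))"
    and cmp_eq: "path_arrow (x, (m, n)) = bar_cmp k G (Inl g) (path_arrow (y, (p, q)))"
    and "deg g = a" "len2 = b"
    using fac bar_deg_pclass[OF e2 key2] unfolding bar_factorization_def bar_deg_def by simp_all
  moreover note comp = bar_cmp_mor_pclass[OF g e2 key2 st]
  ultimately show "deg g = a" "len2 = b" "off2 = 0" "src g = rng s2"
    "pkey (x, (m, n)) = (cmp g s2, 0, a + b)"
    using pclass_eq_imp_pkey_eq[OF e] by (simp_all del: pkey.simps)
qed

lemma factorization_keys_pclass_pclass:
  assumes e1: "(x1, (m1, n1)) \<in> PL k G" and e2: "(y, (p, q)) \<in> PL k G"
    and key1: "pkey (x1, (m1, n1)) = (s1, off1, len1)"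
    and key2: "pkey (y, (p, q)) = (s2, off2, len2)"
    and fac: "bar_factorization (path_arrow (x, (m, n))) a b
      (path_arrow (x1, (m1, n1)), path_arrow (y, (p, q)))"
  shows "len1 = a" "len2 = b" "off2 \<noteq> 0" "src s1 = rng s2" "deg s1 + off2 = off1 + a"
    "pkey (x, (m, n)) = (cmp s1 s2, off1, a + b)"
proof -
  have st: "bar_src k G (path_arrow (x1, (m1, n1))) = bar_rng k G (path_arrow (y, (p, q)))"
    and cmp_eq: "path_arrow (x, (m, n)) =
      bar_cmp k G (path_arrow (x1, (m1, n1))) (path_arrow (y, (p, q)))"
    and len: "len1 = a" "len2 = b"
    using fac bar_deg_pclass[OF e1 key1] bar_deg_pclass[OF e2 key2] unfolding bar_factorization_def
    by simp_all
  note comp = bar_cmp_pclass_pclass[OF e1 e2 key1 key2 st]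
  show "len1 = a" "len2 = b" "off2 \<noteq> 0" "src s1 = rng s2"
    using len comp(1,2) by simp_all
  show "deg s1 + off2 = off1 + a"
    using pkey_segment(2)[OF e1 key1] vec_eq_diff_of_add_eq[OF pkey_segment(2)[OF e1 key1]]
      comp(3) len
    by simp
  show "pkey (x, (m, n)) = (cmp s1 s2, off1, a + b)"
    using pclass_eq_imp_pkey_eq[OF e] cmp_eq comp(4) len by (simp del: pkey.simps)
qed

lemma factorization_mor_first_unique:
  assumes g: "g \<in> M" and e2: "(y, (p, q)) \<in> PL k G"
    and fac: "bar_factorization (path_arrow (x, (m, n))) a b (Inl g, path_arrow (y, (p, q)))"
  shows "(Inl g, path_arrow (y, (p, q))) = canonical_factors x m a n"
proof -
  note gm = PL_D(2)[OF e]
  define nn where "nn = meet n (fst x)"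
  obtain s2 off2 len2 where key2: "pkey (y, (p, q)) = (s2, off2, len2)"
    using prod_cases3 by blast
  note keys = factorization_keys_mor_pclass[OF g e2 key2 fac]
  have "m - meet m (fst x) = 0" and S': "snd x (meet m (fst x)) nn = cmp g s2"
    using keys(5) unfolding nn_def by simp_all
  then have vm: "vle m (fst x)" and S: "snd x m nn = cmp g s2"
    using vle_iff_meet_offset meet_id by auto
  have s2: "s2 \<in> M"
    using pkey_segment(1)[OF e2 key2] .
  have onn: "in_Omega k (fst x) m nn"
    using PL_D(7)[OF e] meet_id[OF vm] unfolding nn_def by simp
  have "nn - m = a + deg s2"
    using gm_deg[OF gm onn] S deg_cmp[OF g s2 keys(4)] keys(1) by simp
  then have man: "m + a \<le> nn"
    using vec_split_interval(1) onn unfolding in_Omega_def by blast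
  have vma: "vle (m + a) (fst x)"
    using vle_le_trans[OF man] meet_vle unfolding nn_def by blast
  have ss: "in_Omega k (fst x) m (m + a)" "in_Omega k (fst x) (m + a) nn"
    using in_Omega_split[OF onn _ man NK_add[OF PL_D(3)[OF e] a]] by (auto simp: le_fun_def)
  have "g = snd x m (m + a) \<and> s2 = snd x (m + a) nn"
    using factorization_cancel[OF g s2 keys(4) gm_mor[OF gm ss(1)] gm_mor[OF gm ss(2)]]
      gm_cmp[OF gm ss] gm_deg[OF gm ss(1)] S keys(1) by simp
  moreover have "pkey (x, (m + a, n)) = (snd x (m + a) nn, 0, b)"
    using meet_id[OF vma] cut_le(2) unfolding nn_def by simp
  ultimately show ?thesis
    unfolding canonical_factors_def using vma key2 keys(2,3) by simp
qed

lemma factorization_pclass_first_unique: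
  assumes e1: "(x1, (m1, n1)) \<in> PL k G" and e2: "(y, (p, q)) \<in> PL k G"
    and fac: "bar_factorization (path_arrow (x, (m, n))) a b
      (path_arrow (x1, (m1, n1)), path_arrow (y, (p, q)))"
  shows "(path_arrow (x1, (m1, n1)), path_arrow (y, (p, q))) = canonical_factors x m a n"
proof -
  note gm = PL_D(2)[OF e]
  define mm where "mm = meet m (fst x)"
  define ma where "ma = meet (m + a) (fst x)"
  define nn where "nn = meet n (fst x)"
  obtain s1 off1 len1 where key1: "pkey (x1, (m1, n1)) = (s1, off1, len1)"
    using prod_cases3 by blast
  obtain s2 off2 len2 where key2: "pkey (y, (p, q)) = (s2, off2, len2)"
    using prod_cases3 by blast
  note keys = factorization_keys_pclass_pclass[OF e1 e2 key1 key2 fac]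
  have S: "snd x mm nn = cmp s1 s2" and off1: "off1 = m - mm"
    using keys(6) unfolding mm_def nn_def by simp_all
  have s12: "s1 \<in> M" "s2 \<in> M"
    using pkey_segment(1) e1 e2 key1 key2 by blast+
  have "meet (m + a) (fst x) = meet m (fst x) + deg s1 \<and> m + a - meet (m + a) (fst x) = off2"
  proof (rule meet_add_of_split[OF cut_le(1)])
    show "meet n (fst x) - meet m (fst x) = deg s1 + deg s2"
      using PL_segment(2)[OF e] S deg_cmp[OF s12 keys(4)] unfolding mm_def nn_def by simp
    show "deg s1 + off2 = m - meet m (fst x) + a"
      using keys(5) off1 unfolding mm_def by simp
    show "0 < off2 i \<Longrightarrow> deg s2 i = 0" for i
      using pkey_segment(3)[OF e2 key2] .
  qed
  then have ma: "ma = mm + deg s1" "m + a - ma = off2"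
    unfolding ma_def mm_def by blast+
  have nva: "\<not> vle (m + a) (fst x)"
    using vle_iff_meet_offset ma(2) keys(3) unfolding ma_def by simp
  have o1: "in_Omega k (fst x) mm ma" and o2: "in_Omega k (fst x) ma nn"
    using PL_D(7)[OF PL_cut_left[OF nva]] PL_D(7)[OF PL_cut_right] unfolding mm_def ma_def nn_def
    by simp_all
  have "deg (snd x mm ma) = deg s1"
    using gm_deg[OF gm o1] ma(1) by simp
  moreover have "cmp s1 s2 = cmp (snd x mm ma) (snd x ma nn)"
    using gm_cmp[OF gm o1 o2] S by simp
  ultimately have "s1 = snd x mm ma \<and> s2 = snd x ma nn"
    using factorization_cancel[OF s12 keys(4) gm_mor[OF gm o1] gm_mor[OF gm o2]] gm_cmp[OF gm o1 o2]
    by simp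
  then have "pkey (x1, (m1, n1)) = pkey (x, (m, m + a))" "pkey (y, (p, q)) = pkey (x, (m + a, n))"
    using key1 key2 off1 keys(1,2) ma(2) cut_le(2) unfolding mm_def ma_def nn_def by simp_all
  then show ?thesis
    unfolding canonical_factors_def using nva by simp
qed

lemma bar_factorization_pclass: "\<exists>!gh. bar_factorization (path_arrow (x, (m, n))) a b gh"
proof
  show "bar_factorization (path_arrow (x, (m, n))) a b (canonical_factors x m a n)"
    using canonical_factorization .
next
  fix gh
  assume fac: "bar_factorization (path_arrow (x, (m, n))) a b gh"
  obtain g h where gh: "gh = (g, h)"
    by fastforce
  obtain y p q where e2: "(y, (p, q)) \<in> PL k G" "h = path_arrow (y, (p, q))"
    using bar_factorization_right_pclass fac unfolding gh by blast
  have g: "g \<in> bar_mor k G"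
    using fac unfolding gh bar_factorization_def by simp
  show "gh = canonical_factors x m a n"
  proof (cases g)
    case (Inl g')
    then have "g' \<in> M"
      using g unfolding bar_mor_def by auto
    then show ?thesis
      using factorization_mor_first_unique[OF _ e2(1)] fac unfolding gh Inl e2(2) by simp
  next
    case (Inr c)
    then obtain e1 where "e1 \<in> PL k G" "g = path_arrow e1"
      using g unfolding bar_mor_iff by blast
    moreover obtain x1 m1 n1 where "e1 = (x1, (m1, n1))"
      by (cases e1) auto
    ultimately show ?thesis
      using factorization_pclass_first_unique[OF _ e2(1)] fac unfolding gh e2(2) by simp
  qed
qed

end

lemma bar_factorization_ex1:
  assumes "f \<in> bar_mor k G" "a \<in> NK k" "b \<in> NK k" "bar_deg k G f = a + b"
  shows "\<exists>!gh. bar_factorization f a b gh"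
  using assms(1) unfolding bar_mor_iff
proof (elim disjE bexE)
  fix l
  assume "l \<in> M" "f = Inl l"
  then show ?thesis
    using bar_factorization_mor assms(2-4) by (simp add: bar_deg_def)
next
  fix e
  assume "e \<in> PL k G" "f = path_arrow e"
  moreover obtain x m n where "e = (x, (m, n))"
    by (cases e) auto
  ultimately have e: "(x, (m, n)) \<in> PL k G" and f: "f = path_arrow (x, (m, n))"
    by simp_all
  have "n - m = a + b"
    using assms(4) bar_deg_pclass[OF e pkey.simps] f by simp
  then show ?thesis
    using bar_factorization_pclass[OF e assms(2)] f by (simp del: pkey.simps)
qed

end

theorem lemma3p23:
  fixes k :: nat and G :: "('v, 'a) kgraph"
  assumes "is_kgraph k G"
  shows "\<forall>f \<in> bar_mor k G. \<forall>a \<in> NK k. \<forall>b \<in> NK k. bar_deg k G f = a + b \<longrightarrow>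
           (\<exists>!gh. fst gh \<in> bar_mor k G \<and> snd gh \<in> bar_mor k G \<and>
                  bar_src k G (fst gh) = bar_rng k G (snd gh) \<and>
                  f = bar_cmp k G (fst gh) (snd gh) \<and>
                  bar_deg k G (fst gh) = a \<and> bar_deg k G (snd gh) = b)"
proof -
  interpret k_graph k G
    using assms by (rule k_graph.intro)
  show ?thesis
    using bar_factorization_ex1 unfolding bar_factorization_def by blast
qed

end
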